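(* Let $N\ge 0$, $L\ge 2$ and $1\le l_A\le L-1$ be integers, put $l_B=L-l_A$, and let $\mathcal H_N$ be the $N$-particle bosonic Fock space of $L$ modes described in the context. Let $\rho$ be a density operator on $\mathcal H_N$ with eigenvalues $p_1\ge p_2\ge\dots\ge p_{d_{AB}}$ listed with multiplicity, where $d_{AB}=\dim\mathcal H_N=\binom{N+L-1}{L-1}$. Order the $N+1$ sectors $\mathcal H_{A,n_A}\otimes\mathcal H_{B,N-n_A}$, $n_A=0,\dots,N$, as $k=0,1,\dots,N$ so that $d_{A,0}\ge d_{A,1}\ge\dots\ge d_{A,N}$, where $d_{A,k}$ and $d_{B,k}$ are the dimensions of the $A$-factor and the $B$-factor of the $k$-th sector, and $d_k=d_{A,k}d_{B,k}$. Partition the decreasingly ordered eigenvalues into consecutive groups: group $0$ consists of the first $d_0$ eigenvalues, group $1$ of the next $d_1$, and so on. Write $p_{k,1}\ge p_{k,2}\ge\dots\ge p_{k,d_k}$ for the eigenvalues in group $k$. Thus every eigenvalue in group $k$ is at least every eigenvalue in group $k+1$. For $b=1,\dots,d_{B,k}$ set $$q_{k,b}=\sum_{a=1}^{d_{A,k}} p_{k,(b-1)d_{A,k}+a}.$$ Then $$\min_{U}\, S\big(\operatorname{Tr}_A(U\rho U^\dagger)\big)=-\sum_{k=0}^{N}\sum_{b=1}^{d_{B,k}} q_{k,b}\log q_{k,b},$$ where the minimum is over all unitary operators $U$ on $\mathcal H_N$, i.e. all unitaries on the Fock space that commute with the total number operator, restricted to $\mathcal H_N$.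
   Context: There are $L$ bosonic modes (sites) with annihilation operators $\hat b_i$ and number operators $\hat n_i=\hat b_i^\dagger\hat b_i$, $i=1,\dots,L$. Subsystem $A$ consists of modes $1,\dots,l_A$ and subsystem $B$ of modes $l_A+1,\dots,L$. $\mathcal H_N$ is the span of the occupation-number basis states $|n_1,\dots,n_L\rangle$ with $\sum_i n_i=N$. It decomposes as $\mathcal H_N=\bigoplus_{n_A=0}^{N}\mathcal H_{A,n_A}\otimes\mathcal H_{B,N-n_A}$. Here $\mathcal H_{A,n}$ is spanned by the states $|n_1,\dots,n_{l_A}\rangle_A$ with $\sum_{i\le l_A}n_i=n$, and has dimension $\binom{n+l_A-1}{l_A-1}$. Likewise $\mathcal H_{B,m}$ is spanned by the states $|n_{l_A+1},\dots,n_L\rangle_B$ with total number $m$, and has dimension $\binom{m+l_B-1}{l_B-1}$. The reduced state $\operatorname{Tr}_A$ is the partial trace over the modes of $A$, taken in the usual Fock space of $A$ and $B$. Equivalently, $\operatorname{Tr}_A\sigma=\bigoplus_{m}\operatorname{Tr}_{\mathcal H_{A,N-m}}\big(\text{diagonal block of }\sigma\text{ on }\mathcal H_{A,N-m}\otimes\mathcal H_{B,m}\big)$. $S(\sigma)=-\operatorname{Tr}\sigma\log\sigma$ is the von Neumann entropy, with a fixed logarithm base and the convention $0\log 0=0$. *)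

theory Defs
  imports "Jordan_Normal_Form.Matrix" "Jordan_Normal_Form.Char_Poly"
    "HOL-Computational_Algebra.Polynomial"
begin

text \<open>Occupation-number basis: all lists of length l of naturals with sum n,
  in a fixed enumeration. The basis of H_N for L modes is comps N L.\<close>
fun comps :: "nat \<Rightarrow> nat \<Rightarrow> nat list list" where
  "comps n 0 = (if n = 0 then [[]] else [])"
| "comps n (Suc l) = concat (map (\<lambda>k. map (\<lambda>xs. k # xs) (comps (n - k) l)) [0..<Suc n])"

definition adj :: "complex mat \<Rightarrow> complex mat" where
  "adj A = mat (dim_col A) (dim_row A) (\<lambda>(i, j). cnj (A $$ (j, i)))"

definition unitary_op :: "nat \<Rightarrow> complex mat \<Rightarrow> bool" where
  "unitary_op d U \<longleftrightarrow> U \<in> carrier_mat d d \<and> U * adj U = 1\<^sub>m d"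

definition mat_trace :: "complex mat \<Rightarrow> complex" where
  "mat_trace A = (\<Sum>i<dim_row A. A $$ (i, i))"

definition density_op :: "nat \<Rightarrow> complex mat \<Rightarrow> bool" where
  "density_op d R \<longleftrightarrow> R \<in> carrier_mat d d \<and> adj R = R
     \<and> (\<forall>v \<in> carrier_vec d. 0 \<le> Re (conjugate v \<bullet> (R *\<^sub>v v)))
     \<and> mat_trace R = 1"

text \<open>Basis of the Fock space of B (l_B modes) with at most N particles.\<close>
definition Bstates :: "nat \<Rightarrow> nat \<Rightarrow> nat list list" where
  "Bstates N lB = concat (map (\<lambda>m. comps m lB) [0..<Suc N])"

text \<open>Partial trace over the first lA modes of an operator on H_N (L modes),
  Tr_A sigma (y,y') = sum_x sigma(x y, x y').\<close>
definition ptrace_A :: "nat \<Rightarrow> nat \<Rightarrow> nat \<Rightarrow> complex mat \<Rightarrow> complex mat" where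
  "ptrace_A N L lA \<sigma> =
    (let st = comps N L; d = length st; Bs = Bstates N (L - lA); dB = length Bs in
     mat dB dB (\<lambda>(i, j). \<Sum>a<d. \<Sum>b<d.
        if drop lA (st ! a) = Bs ! i \<and> drop lA (st ! b) = Bs ! j
           \<and> take lA (st ! a) = take lA (st ! b)
        then \<sigma> $$ (a, b) else 0))"

text \<open>Note log beta 0 = 0 in Isabelle, giving the convention 0 log 0 = 0.\<close>
definition vN_entropy :: "real \<Rightarrow> complex mat \<Rightarrow> real" where
  "vN_entropy \<beta> A = - sum_mset (image_mset (\<lambda>z. Re z * log \<beta> (Re z)) (proots (char_poly A)))"

end

theory Submission
  imports Defs "Jordan_Normal_Form.Schur_Decomposition" "HOL-Combinatorics.Permutations"
begin

text \<open>Write \<open>\<rho> = W diag(p) W\<^sup>\<dagger>\<close> and let \<open>\<tau>\<close> be the reduced state of \<open>U\<rho>U\<^sup>\<dagger>\<close>. Its eigenvalues are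
  \<open>r\<^sub>j = \<Sum>\<^sub>t p\<^sub>t M\<^sub>t\<^sub>j\<close> with weights \<open>M \<ge> 0\<close> whose rows sum to \<open>1\<close>, and the first \<open>m\<close> columns of
  \<open>M\<close> carry total weight at most the sum of the \<open>m\<close> largest fibre sizes, i.e.\ of the \<open>m\<close> largest
  numbers of \<open>A\<close>-states compatible with a \<open>B\<close>-state. Since \<open>p\<close> is decreasing, the sorted \<open>r\<close> is
  majorised by the block sums \<open>q\<close>, and convexity of \<open>x log x\<close> gives \<open>S(\<tau>) \<ge> -\<Sum> q log q\<close>.
  Equality is attained by permuting the eigenbasis of \<open>\<rho>\<close> so that each block of consecutive
  eigenvalues fills the fibre over one \<open>B\<close>-state: then \<open>\<tau>\<close> is diagonal with entries \<open>q\<close>.\<close>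

definition diag_matrix :: "nat \<Rightarrow> (nat \<Rightarrow> complex) \<Rightarrow> complex mat" where
  "diag_matrix n f = mat n n (\<lambda>(i, j). if i = j then f i else 0)"

lemma diag_matrix_carrier [simp]:
  "diag_matrix n f \<in> carrier_mat n n" "dim_row (diag_matrix n f) = n" "dim_col (diag_matrix n f) = n"
  by (auto simp: diag_matrix_def)

lemma diag_matrix_index [simp]:
  "i < n \<Longrightarrow> j < n \<Longrightarrow> diag_matrix n f $$ (i, j) = (if i = j then f i else 0)"
  by (simp add: diag_matrix_def)

lemma adj_dim [simp]: "dim_row (adj A) = dim_col A" "dim_col (adj A) = dim_row A"
  by (auto simp: adj_def)

lemma adj_carrier [simp]: "A \<in> carrier_mat n m \<Longrightarrow> adj A \<in> carrier_mat m n"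
  by (auto simp: adj_def)

lemma adj_index [simp]: "i < dim_col A \<Longrightarrow> j < dim_row A \<Longrightarrow> adj A $$ (i, j) = cnj (A $$ (j, i))"
  by (simp add: adj_def)

lemma adj_adj [simp]: "adj (adj A) = A"
  by (rule eq_matI) auto

lemma adj_one [simp]: "adj (1\<^sub>m n) = 1\<^sub>m n"
  by (rule eq_matI) auto

lemma adj_diag_matrix_real [simp]:
  "adj (diag_matrix n (\<lambda>i. complex_of_real (r i))) = diag_matrix n (\<lambda>i. complex_of_real (r i))"
  by (rule eq_matI) auto

lemma hermitian_index:
  "adj A = A \<Longrightarrow> A \<in> carrier_mat n n \<Longrightarrow> i < n \<Longrightarrow> j < n \<Longrightarrow> A $$ (i, j) = cnj (A $$ (j, i))"
  by (metis adj_index carrier_matD)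

lemma mult_mat_index_sum:
  "A \<in> carrier_mat n m \<Longrightarrow> B \<in> carrier_mat m k \<Longrightarrow> i < n \<Longrightarrow> j < k \<Longrightarrow>
    (A * B) $$ (i, j) = (\<Sum>l<m. A $$ (i, l) * B $$ (l, j))"
  by (auto simp: scalar_prod_def row_def col_def intro!: sum.cong)

lemma adj_mult:
  assumes "A \<in> carrier_mat n m" "B \<in> carrier_mat m k"
  shows "adj (A * B) = adj B * adj A"
proof (rule eq_matI)
  fix i j assume "i < dim_row (adj B * adj A)" "j < dim_col (adj B * adj A)"
  then have ij: "i < k" "j < n" using assms by auto
  have "adj (A * B) $$ (i, j) = cnj (\<Sum>l<m. A $$ (j, l) * B $$ (l, i))"
    using assms ij by (simp add: mult_mat_index_sum[OF assms ij(2) ij(1)])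
  also have "\<dots> = (adj B * adj A) $$ (i, j)"
    using assms ij by (subst mult_mat_index_sum[of _ k m _ n]) (auto simp: cnj_sum intro!: sum.cong)
  finally show "adj (A * B) $$ (i, j) = (adj B * adj A) $$ (i, j)" .
qed (use assms in auto)

lemma unitary_carrier: "unitary_op n U \<Longrightarrow> U \<in> carrier_mat n n"
  by (simp add: unitary_op_def)

lemma unitary_right: "unitary_op n U \<Longrightarrow> U * adj U = 1\<^sub>m n"
  by (simp add: unitary_op_def)

lemma unitary_left: "unitary_op n U \<Longrightarrow> adj U * U = 1\<^sub>m n"
  by (rule mat_mult_left_right_inverse[of U n]) (auto simp: unitary_op_def)

lemma unitary_opI: "U \<in> carrier_mat n n \<Longrightarrow> adj U * U = 1\<^sub>m n \<Longrightarrow> unitary_op n U"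
  using mat_mult_left_right_inverse[of "adj U" n U] by (simp add: unitary_op_def)

lemma unitary_adj: "unitary_op n U \<Longrightarrow> unitary_op n (adj U)"
  using unitary_left[of n U] by (auto simp: unitary_op_def)

lemma unitary_one: "unitary_op n (1\<^sub>m n)"
  by (simp add: unitary_op_def)

lemma unitary_mult:
  assumes "unitary_op n U" "unitary_op n V"
  shows "unitary_op n (U * V)"
proof -
  have U: "U \<in> carrier_mat n n" and V: "V \<in> carrier_mat n n"
    using assms by (auto simp: unitary_op_def)
  have "U * V * adj (U * V) = U * (V * adj V) * adj U"
    using U V by (simp add: adj_mult[OF U V] assoc_mult_mat[of _ n n _ n _ n] mult_carrier_mat[of _ n n _ n])
  also have "\<dots> = 1\<^sub>m n"
    using U assms by (simp add: unitary_right)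
  finally show ?thesis using U V by (simp add: unitary_op_def)
qed

lemma unitary_row_norm:
  assumes "unitary_op n V" "i < n"
  shows "(\<Sum>j<n. (cmod (V $$ (i, j)))\<^sup>2) = 1"
proof -
  have "complex_of_real (\<Sum>j<n. (cmod (V $$ (i, j)))\<^sup>2) = (\<Sum>j<n. V $$ (i, j) * cnj (V $$ (i, j)))"
    by (simp only: of_real_sum complex_norm_square)
  also have "\<dots> = (V * adj V) $$ (i, i)"
    using assms unitary_carrier[OF assms(1)] by (subst mult_mat_index_sum[of _ n n]) auto
  finally show ?thesis using unitary_right[OF assms(1)] assms(2) by (metis index_one_mat(1) of_real_eq_1_iff)
qed

lemma unitary_col_norm:
  assumes "unitary_op n V" "j < n"
  shows "(\<Sum>i<n. (cmod (V $$ (i, j)))\<^sup>2) = 1"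
proof -
  have "complex_of_real (\<Sum>i<n. (cmod (V $$ (i, j)))\<^sup>2) = (\<Sum>i<n. cnj (V $$ (i, j)) * V $$ (i, j))"
    by (simp only: of_real_sum complex_norm_square mult.commute)
  also have "\<dots> = (adj V * V) $$ (j, j)"
    using assms unitary_carrier[OF assms(1)] by (subst mult_mat_index_sum[of _ n n]) auto
  finally show ?thesis using unitary_left[OF assms(1)] assms(2) by (metis index_one_mat(1) of_real_eq_1_iff)
qed

lemma conj_diag_index:
  assumes W: "W \<in> carrier_mat n n" and ij: "i < n" "j < n"
  shows "(W * diag_matrix n f * adj W) $$ (i, j) = (\<Sum>k<n. W $$ (i, k) * f k * cnj (W $$ (j, k)))"
proof -
  have WD: "(W * diag_matrix n f) $$ (i, k) = W $$ (i, k) * f k" if "k < n" for k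
    using W ij that
    by (subst mult_mat_index_sum[OF W diag_matrix_carrier(1)]) (simp_all add: if_distrib cong: if_cong)
  show ?thesis
    using W ij by (subst mult_mat_index_sum[of _ n n _ n]) (simp_all add: WD del: index_mult_mat)
qed

lemma conj_diag_hermitian:
  assumes W: "W \<in> carrier_mat n n"
  shows "adj (W * diag_matrix n (\<lambda>i. complex_of_real (r i)) * adj W)
       = W * diag_matrix n (\<lambda>i. complex_of_real (r i)) * adj W"
  using W by (simp add: adj_mult[of _ n n _ n] assoc_mult_mat[of _ n n _ n _ n] mult_carrier_mat[of _ n n _ n])

lemma unitary_conj_cancel:
  assumes "unitary_op n V" "A \<in> carrier_mat n n"
  shows "adj V * (V * A * adj V) * V = A"
proof -
  have V: "V \<in> carrier_mat n n" using assms unitary_carrier by blast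
  then have "adj V * (V * A * adj V) * V = (adj V * V) * A * (adj V * V)"
    using assms(2) by (simp add: assoc_mult_mat[of _ n n _ n _ n] mult_carrier_mat[of _ n n _ n])
  then show ?thesis using unitary_left[OF assms(1)] assms(2) by simp
qed

lemma cscalar_prod_self:
  assumes "w \<in> carrier_vec n"
  shows "w \<bullet>c w = complex_of_real (\<Sum>k<n. (cmod (w $ k))\<^sup>2)"
proof -
  have "w \<bullet>c w = (\<Sum>k<n. w $ k * cnj (w $ k))"
    using assms by (auto simp: scalar_prod_def atLeast0LessThan)
  then show ?thesis by (simp only: of_real_sum complex_norm_square)
qed

section \<open>Spectral theorem for Hermitian matrices\<close>

lemma unitary_with_first_column:
  assumes v: "v \<in> carrier_vec n" and v0: "v \<noteq> 0\<^sub>v n"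
  shows "\<exists>W c. unitary_op n W \<and> (\<forall>k<n. W $$ (k, 0) = c * v $ k)"
proof -
  interpret cof_vec_space n "TYPE(complex)" .
  define b where "b = basis_completion v"
  from basis_completion[OF v v0, folded b_def]
  have dist_b: "distinct b" and indep: "\<not> lin_dep (set b)" and b: "set b \<subseteq> carrier_vec n"
    and hdb: "hd b = v" and len_b: "length b = n" by auto
  have "n \<noteq> 0" using v v0 by auto
  with hdb len_b obtain vs where bv: "b = v # vs" by (cases b) auto
  define ws where "ws = gram_schmidt n b"
  from gram_schmidt_result[OF b dist_b indep refl, folded ws_def]
  have wsc: "set ws \<subseteq> carrier_vec n" and orth: "corthogonal ws" and lws: "length ws = n"
    by (auto simp: len_b)
  have ws0: "ws ! 0 = v"
    using gram_schmidt_hd[OF v, of vs, folded bv ws_def] lws \<open>n \<noteq> 0\<close> by (cases ws) auto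
  have wsj: "ws ! j \<in> carrier_vec n" if "j < n" for j using wsc lws that by auto
  define ns where "ns j = sqrt (\<Sum>k<n. (cmod (ws ! j $ k))\<^sup>2)" for j
  have ns_sq: "ws ! j \<bullet>c ws ! j = complex_of_real ((ns j)\<^sup>2)" if "j < n" for j
    using cscalar_prod_self[OF wsj[OF that]] by (simp add: ns_def sum_nonneg)
  have ns_pos: "ns j > 0" if "j < n" for j
  proof -
    have "ws ! j \<bullet>c ws ! j \<noteq> 0" using corthogonalD[OF orth] that lws by auto
    then have "(\<Sum>k<n. (cmod (ws ! j $ k))\<^sup>2) \<noteq> 0"
      using cscalar_prod_self[OF wsj[OF that]] by (auto simp del: of_real_sum of_real_power)
    moreover have "(\<Sum>k<n. (cmod (ws ! j $ k))\<^sup>2) \<ge> 0" by (rule sum_nonneg) simp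
    ultimately show ?thesis by (simp add: ns_def)
  qed
  define W where "W = mat n n (\<lambda>(i, j). ws ! j $ i / complex_of_real (ns j))"
  have W: "W \<in> carrier_mat n n" unfolding W_def by auto
  have "adj W * W = 1\<^sub>m n"
  proof (rule eq_matI)
    fix i j assume "i < dim_row (1\<^sub>m n)" "j < dim_col (1\<^sub>m n)"
    then have ij: "i < n" "j < n" by auto
    have "(adj W * W) $$ (i, j) = (\<Sum>k<n. ws ! j $ k * cnj (ws ! i $ k)) / complex_of_real (ns i * ns j)"
      using W ij by (subst mult_mat_index_sum[OF adj_carrier[OF W] W])
        (auto simp: W_def sum_divide_distrib intro!: sum.cong)
    also have "\<dots> = (ws ! j \<bullet>c ws ! i) / complex_of_real (ns i * ns j)"
      using carrier_vecD[OF wsj[OF ij(1)]] by (simp add: scalar_prod_def atLeast0LessThan)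
    also have "\<dots> = 1\<^sub>m n $$ (i, j)"
      using corthogonalD[OF orth] ij lws ns_sq ns_pos[OF ij(1)] by (auto simp: power2_eq_square)
    finally show "(adj W * W) $$ (i, j) = 1\<^sub>m n $$ (i, j)" .
  qed (use W in auto)
  then have "unitary_op n W" using W by (rule unitary_opI[rotated])
  moreover have "W $$ (k, 0) = (1 / complex_of_real (ns 0)) * v $ k" if "k < n" for k
    using that \<open>n \<noteq> 0\<close> ws0 by (simp add: W_def)
  ultimately show ?thesis by blast
qed

definition border_one :: "complex mat \<Rightarrow> complex mat" where
  "border_one W = mat (Suc (dim_row W)) (Suc (dim_col W))
     (\<lambda>(i, j). if i = 0 \<or> j = 0 then (if i = j then 1 else 0) else W $$ (i - 1, j - 1))"

lemma border_one_carrier: "W \<in> carrier_mat m m \<Longrightarrow> border_one W \<in> carrier_mat (Suc m) (Suc m)"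
  by (simp add: border_one_def)

lemma conj_diag_border_one_index:
  assumes W: "W \<in> carrier_mat m m" and ij: "i < Suc m" "j < Suc m"
  shows "(border_one W * diag_matrix (Suc m) f * adj (border_one W)) $$ (i, j)
       = (if i = 0 \<or> j = 0 then (if i = j then f 0 else 0)
          else (W * diag_matrix m (\<lambda>k. f (Suc k)) * adj W) $$ (i - 1, j - 1))"
proof -
  have B: "border_one W \<in> carrier_mat (Suc m) (Suc m)" using border_one_carrier[OF W] .
  have "(border_one W * diag_matrix (Suc m) f * adj (border_one W)) $$ (i, j)
      = border_one W $$ (i, 0) * f 0 * cnj (border_one W $$ (j, 0))
        + (\<Sum>k<m. border_one W $$ (i, Suc k) * f (Suc k) * cnj (border_one W $$ (j, Suc k)))"
    by (simp only: conj_diag_index[OF B ij] sum.lessThan_Suc_shift)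
  also have "\<dots> = (if i = 0 \<or> j = 0 then (if i = j then f 0 else 0)
          else (W * diag_matrix m (\<lambda>k. f (Suc k)) * adj W) $$ (i - 1, j - 1))"
    using W ij by (cases i; cases j) (auto simp: border_one_def conj_diag_index[OF W] simp del: index_mult_mat)
  finally show ?thesis .
qed

lemma unitary_border_one:
  assumes "unitary_op m W"
  shows "unitary_op (Suc m) (border_one W)"
proof -
  have W: "W \<in> carrier_mat m m" using assms by (rule unitary_carrier)
  have "border_one W * diag_matrix (Suc m) (\<lambda>_. 1) * adj (border_one W) = 1\<^sub>m (Suc m)"
  proof (rule eq_matI)
    fix i j assume "i < dim_row (1\<^sub>m (Suc m))" "j < dim_col (1\<^sub>m (Suc m))"
    then have ij: "i < Suc m" "j < Suc m" by auto
    have "W * diag_matrix m (\<lambda>_. 1) * adj W = 1\<^sub>m m"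
      using W unitary_right[OF assms] by (simp add: diag_matrix_def one_mat_def[symmetric])
    then show "(border_one W * diag_matrix (Suc m) (\<lambda>_. 1) * adj (border_one W)) $$ (i, j) = 1\<^sub>m (Suc m) $$ (i, j)"
      using conj_diag_border_one_index[OF W ij] ij by auto
  qed (use W border_one_carrier[OF W] in auto)
  moreover have "diag_matrix (Suc m) (\<lambda>_. 1) = 1\<^sub>m (Suc m)"
    by (rule eq_matI) auto
  ultimately show ?thesis
    using border_one_carrier[OF W] by (simp add: unitary_op_def)
qed

lemma hermitian_deflate:
  assumes B: "B \<in> carrier_mat (Suc m) (Suc m)" and hB: "adj B = B"
    and col0: "\<And>i. i < Suc m \<Longrightarrow> B $$ (i, 0) = (if i = 0 then e else 0)"
    and W: "W \<in> carrier_mat m m"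
    and rest: "mat_delete B 0 0 = W * diag_matrix m (\<lambda>i. complex_of_real (r i)) * adj W"
  defines "r' \<equiv> \<lambda>i. complex_of_real (case i of 0 \<Rightarrow> Re e | Suc k \<Rightarrow> r k)"
  shows "B = border_one W * diag_matrix (Suc m) r' * adj (border_one W)"
proof (rule eq_matI)
  have e_real: "e = complex_of_real (Re e)"
    using hermitian_index[OF hB B, of 0 0] col0[of 0] by (simp add: complex_eq_iff)
  fix i j assume "i < dim_row (border_one W * diag_matrix (Suc m) r' * adj (border_one W))"
    "j < dim_col (border_one W * diag_matrix (Suc m) r' * adj (border_one W))"
  then have ij: "i < Suc m" "j < Suc m" using W border_one_carrier[OF W] by auto
  have "B $$ (i, j) = (if i = 0 \<or> j = 0 then (if i = j then r' 0 else 0)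
          else (W * diag_matrix m (\<lambda>k. r' (Suc k)) * adj W) $$ (i - 1, j - 1))"
  proof (cases "j = 0")
    case True
    then show ?thesis using col0[OF ij(1)] e_real by (simp add: r'_def)
  next
    case j: False
    show ?thesis
    proof (cases "i = 0")
      case True
      have "B $$ (0, j) = cnj (B $$ (j, 0))" using hermitian_index[OF hB B _ ij(2)] by simp
      then show ?thesis using True j col0[OF ij(2)] by simp
    next
      case False
      then have "B $$ (i, j) = mat_delete B 0 0 $$ (i - 1, j - 1)"
        using j ij B by (simp add: mat_delete_def)
      then show ?thesis using False j by (simp add: rest r'_def)
    qed
  qed
  then show "B $$ (i, j) = (border_one W * diag_matrix (Suc m) r' * adj (border_one W)) $$ (i, j)"
    by (simp only: conj_diag_border_one_index[OF W ij])
qed (use B W border_one_carrier[OF W] in auto)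

lemma hermitian_mat_delete:
  assumes "B \<in> carrier_mat (Suc m) (Suc m)" "adj B = B"
  shows "mat_delete B 0 0 \<in> carrier_mat m m" "adj (mat_delete B 0 0) = mat_delete B 0 0"
proof -
  show "mat_delete B 0 0 \<in> carrier_mat m m" using assms(1) by (simp add: mat_delete_def)
  show "adj (mat_delete B 0 0) = mat_delete B 0 0"
  proof (rule eq_matI)
    fix i j assume "i < dim_row (mat_delete B 0 0)" "j < dim_col (mat_delete B 0 0)"
    then have "i < m" "j < m" using assms(1) by auto
    then show "adj (mat_delete B 0 0) $$ (i, j) = mat_delete B 0 0 $$ (i, j)"
      using hermitian_index[OF assms(2,1), of "Suc j" "Suc i"] assms(1) by (simp add: mat_delete_def)
  qed (use assms(1) in auto)
qed

lemma unitary_conj_first_column_eigen: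
  assumes A: "A \<in> carrier_mat (Suc m) (Suc m)" and W0u: "unitary_op (Suc m) W0"
    and v: "v \<in> carrier_vec (Suc m)" and Av: "A *\<^sub>v v = e \<cdot>\<^sub>v v"
    and W0v: "\<forall>k<Suc m. W0 $$ (k, 0) = c * v $ k" and i: "i < Suc m"
  shows "(adj W0 * A * W0) $$ (i, 0) = (if i = 0 then e else 0)"
proof -
  have W0: "W0 \<in> carrier_mat (Suc m) (Suc m)" using W0u by (rule unitary_carrier)
  have AW0: "(A * W0) $$ (k, 0) = e * W0 $$ (k, 0)" if "k < Suc m" for k
  proof -
    have "(A * W0) $$ (k, 0) = c * (A *\<^sub>v v) $ k"
      using A W0 v that W0v
      by (subst mult_mat_index_sum[OF A W0]) (auto simp: scalar_prod_def atLeast0LessThan sum_distrib_left ac_simps simp del: sum.lessThan_Suc intro!: sum.cong)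
    then show ?thesis using Av v that W0v by simp
  qed
  have "(adj W0 * A * W0) $$ (i, 0) = (\<Sum>k<Suc m. adj W0 $$ (i, k) * (A * W0) $$ (k, 0))"
    using A W0 i
    by (subst assoc_mult_mat[OF adj_carrier[OF W0] A W0], subst mult_mat_index_sum[of _ "Suc m" "Suc m"]) auto
  also have "\<dots> = e * (\<Sum>k<Suc m. adj W0 $$ (i, k) * W0 $$ (k, 0))"
    by (simp add: AW0 sum_distrib_left ac_simps del: sum.lessThan_Suc)
  also have "\<dots> = e * (adj W0 * W0) $$ (i, 0)"
    using W0 i by (simp add: mult_mat_index_sum[OF adj_carrier[OF W0] W0] del: index_mult_mat sum.lessThan_Suc)
  finally show ?thesis using unitary_left[OF W0u] i by simp
qed

theorem hermitian_spectral:
  assumes "A \<in> carrier_mat n n" "adj A = A"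
  shows "\<exists>W r. unitary_op n W \<and> A = W * diag_matrix n (\<lambda>i. complex_of_real (r i)) * adj W"
  using assms
proof (induction n arbitrary: A)
  case 0
  then have "A = 1\<^sub>m 0 * diag_matrix 0 (\<lambda>i. complex_of_real 0) * adj (1\<^sub>m 0)"
    by (intro eq_matI) simp_all
  then show ?case using unitary_one by (intro exI[of _ "1\<^sub>m 0"] exI[of _ "\<lambda>i. 0::real"]) simp
next
  case (Suc m A)
  have A: "A \<in> carrier_mat (Suc m) (Suc m)" using Suc.prems(1) .
  have "\<not> constant (poly (char_poly A))"
    using degree_monic_char_poly[OF A] constant_degree[of "char_poly A"] by simp
  then obtain e where "poly (char_poly A) e = 0" using fundamental_theorem_of_algebra by blast
  then have "eigenvalue A e" using eigenvalue_root_char_poly[OF A] by simp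
  then have "eigenvector A (find_eigenvector A e) e" by (rule find_eigenvector[OF A])
  then obtain v where v: "v \<in> carrier_vec (Suc m)" "v \<noteq> 0\<^sub>v (Suc m)" and Av: "A *\<^sub>v v = e \<cdot>\<^sub>v v"
    using A unfolding eigenvector_def by auto
  obtain W0 c where W0u: "unitary_op (Suc m) W0" and W0v: "\<forall>k<Suc m. W0 $$ (k, 0) = c * v $ k"
    using unitary_with_first_column[OF v] by blast
  have W0: "W0 \<in> carrier_mat (Suc m) (Suc m)" using W0u by (rule unitary_carrier)
  define B where "B = adj W0 * A * W0"
  have B: "B \<in> carrier_mat (Suc m) (Suc m)" unfolding B_def using W0 A by auto
  have hB: "adj B = B"
    unfolding B_def using W0 A Suc.prems(2)
    by (simp add: adj_mult[of _ "Suc m" "Suc m" _ "Suc m"] mult_carrier_mat[of _ "Suc m" "Suc m" _ "Suc m"]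
        assoc_mult_mat[of _ "Suc m" "Suc m" _ "Suc m" _ "Suc m"])
  have col0: "B $$ (i, 0) = (if i = 0 then e else 0)" if "i < Suc m" for i
    unfolding B_def by (rule unitary_conj_first_column_eigen[OF A W0u v(1) Av W0v that])
  obtain W2 r2 where W2u: "unitary_op m W2"
    and rest: "mat_delete B 0 0 = W2 * diag_matrix m (\<lambda>i. complex_of_real (r2 i)) * adj W2"
    using Suc.IH[OF hermitian_mat_delete[OF B hB]] by blast
  define r where "r i = (case i of 0 \<Rightarrow> Re e | Suc k \<Rightarrow> r2 k)" for i
  define D where "D = diag_matrix (Suc m) (\<lambda>i. complex_of_real (r i))"
  have W2: "W2 \<in> carrier_mat m m" using W2u by (rule unitary_carrier)
  have Wb: "border_one W2 \<in> carrier_mat (Suc m) (Suc m)" by (rule border_one_carrier[OF W2])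
  have D: "D \<in> carrier_mat (Suc m) (Suc m)" by (simp add: D_def)
  have Beq: "B = border_one W2 * D * adj (border_one W2)"
    unfolding D_def r_def by (rule hermitian_deflate[OF B hB col0 W2 rest])
  have "A = (W0 * adj W0) * A * (W0 * adj W0)" using unitary_right[OF W0u] A by simp
  also have "\<dots> = W0 * B * adj W0"
    unfolding B_def using W0 A
    by (simp add: assoc_mult_mat[of _ "Suc m" "Suc m" _ "Suc m" _ "Suc m"] mult_carrier_mat[of _ "Suc m" "Suc m" _ "Suc m"])
  also have "\<dots> = (W0 * border_one W2) * D * adj (W0 * border_one W2)"
    unfolding Beq using W0 Wb D
    by (simp add: adj_mult[OF W0 Wb] assoc_mult_mat[of _ "Suc m" "Suc m" _ "Suc m" _ "Suc m"]
        mult_carrier_mat[of _ "Suc m" "Suc m" _ "Suc m"])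
  finally show ?case
    using unitary_mult[OF W0u unitary_border_one[OF W2u]] unfolding D_def
    by (intro exI[of _ "W0 * border_one W2"] exI[of _ r]) simp
qed

lemma proots_prod_linear: "proots (\<Prod>a\<leftarrow>xs. [:- a, 1:]) = mset (xs :: complex list)"
proof (induction xs)
  case (Cons x xs)
  have "(\<Prod>a\<leftarrow>xs. [:- a, 1:]) \<noteq> 0" by (auto simp: prod_list_zero_iff)
  then show ?case using Cons by (simp add: proots_mult del: mult_pCons_left)
qed simp

lemma proots_char_poly_conj_diag:
  assumes "unitary_op n W"
  shows "proots (char_poly (W * diag_matrix n f * adj W)) = mset (map f [0..<n])"
proof -
  have W: "W \<in> carrier_mat n n" using assms unitary_carrier by blast
  have "similar_mat (W * diag_matrix n f * adj W) (diag_matrix n f)"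
    unfolding similar_mat_def similar_mat_wit_def
    using W unitary_right[OF assms] unitary_left[OF assms]
    by (intro exI[of _ W] exI[of _ "adj W"] exI[of _ n]) auto
  then have "char_poly (W * diag_matrix n f * adj W) = char_poly (diag_matrix n f)"
    by (rule char_poly_similar)
  also have "\<dots> = (\<Prod>a\<leftarrow>diag_mat (diag_matrix n f). [:- a, 1:])"
    by (rule char_poly_upper_triangular[of _ n]) (auto simp: upper_triangular_def)
  also have "diag_mat (diag_matrix n f) = map f [0..<n]"
    by (auto simp: diag_mat_def intro!: nth_equalityI)
  finally show ?thesis by (simp only: proots_prod_linear)
qed

lemma vN_entropy_conj_diag:
  assumes "unitary_op n W"
  shows "vN_entropy \<beta> (W * diag_matrix n (\<lambda>i. complex_of_real (r i)) * adj W) = - (\<Sum>i<n. r i * log \<beta> (r i))"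
proof -
  have "sum_mset (image_mset (\<lambda>z. Re z * log \<beta> (Re z)) (mset (map (\<lambda>i. complex_of_real (r i)) [0..<n])))
      = sum_list (map (\<lambda>i. r i * log \<beta> (r i)) [0..<n])"
    by (simp only: mset_map[symmetric] sum_mset_sum_list map_map) (simp add: comp_def)
  also have "\<dots> = (\<Sum>i<n. r i * log \<beta> (r i))"
    by (simp only: sum_set_upt_conv_sum_list_nat[symmetric] set_upt atLeast0LessThan)
  finally show ?thesis unfolding vN_entropy_def proots_char_poly_conj_diag[OF assms] by simp
qed

definition perm_matrix :: "nat \<Rightarrow> (nat \<Rightarrow> nat) \<Rightarrow> complex mat" where
  "perm_matrix n f = mat n n (\<lambda>(k, i). if k = f i then 1 else 0)"

lemma perm_matrix_conj_diag:
  assumes f: "bij_betw f {..<n} {..<n}"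
  shows "perm_matrix n f * diag_matrix n (\<lambda>i. g (f i)) * adj (perm_matrix n f) = diag_matrix n g"
proof (rule eq_matI)
  have P: "perm_matrix n f \<in> carrier_mat n n" by (simp add: perm_matrix_def)
  fix k l assume "k < dim_row (diag_matrix n g)" "l < dim_col (diag_matrix n g)"
  then have kl: "k < n" "l < n" by auto
  have "(perm_matrix n f * diag_matrix n (\<lambda>i. g (f i)) * adj (perm_matrix n f)) $$ (k, l)
      = (\<Sum>i<n. (\<lambda>x. (if k = x then 1 else 0) * g x * (if l = x then 1 else 0)) (f i))"
    using conj_diag_index[OF P kl] kl f by (intro trans[OF conj_diag_index[OF P kl]] sum.cong) (auto simp: perm_matrix_def bij_betw_def)
  also have "\<dots> = (\<Sum>x<n. (if k = x then 1 else 0) * g x * (if l = x then 1 else 0))"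
    by (rule sum.reindex_bij_betw[OF f])
  also have "\<dots> = diag_matrix n g $$ (k, l)" using kl by (auto simp: if_distrib cong: if_cong)
  finally show "(perm_matrix n f * diag_matrix n (\<lambda>i. g (f i)) * adj (perm_matrix n f)) $$ (k, l) = diag_matrix n g $$ (k, l)" .
qed (auto simp: perm_matrix_def)

lemma unitary_perm_matrix:
  assumes "bij_betw f {..<n} {..<n}"
  shows "unitary_op n (perm_matrix n f)"
proof -
  have "diag_matrix n (\<lambda>i. 1) = 1\<^sub>m n" by (rule eq_matI) auto
  moreover have "perm_matrix n f * 1\<^sub>m n = perm_matrix n f" by (simp add: perm_matrix_def)
  ultimately show ?thesis using perm_matrix_conj_diag[OF assms, of "\<lambda>i. 1"]
    by (auto simp: unitary_op_def perm_matrix_def)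
qed

lemma hermitian_diagonalisation_eigenvalue_list:
  assumes A: "A \<in> carrier_mat n n" and h: "adj A = A"
    and p: "mset (map complex_of_real p) = proots (char_poly A)"
  shows "length p = n"
    and "\<exists>W. unitary_op n W \<and> A = W * diag_matrix n (\<lambda>i. complex_of_real (p ! i)) * adj W"
proof -
  obtain W r where Wu: "unitary_op n W"
    and Aeq: "A = W * diag_matrix n (\<lambda>i. complex_of_real (r i)) * adj W"
    using hermitian_spectral[OF A h] by blast
  have "mset (map complex_of_real p) = mset (map (\<lambda>i. complex_of_real (r i)) [0..<n])"
    using p proots_char_poly_conj_diag[OF Wu] Aeq by simp
  then have "image_mset Re (mset (map complex_of_real p))
      = image_mset Re (mset (map (\<lambda>i. complex_of_real (r i)) [0..<n]))"
    by simp
  then have mp: "mset p = mset (map r [0..<n])" by (simp add: multiset.map_comp comp_def)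
  then show lp: "length p = n" by (metis length_map length_upt minus_nat.diff_0 size_mset)
  obtain f where fp: "f permutes {..<n}" and pl: "permute_list f (map r [0..<n]) = p"
    using mset_eq_permutation[OF mp] by auto
  have fb: "bij_betw f {..<n} {..<n}" using fp permutes_imp_bij by fastforce
  have pi: "p ! i = r (f i)" if "i < n" for i
    using pl permute_list_nth[of f "map r [0..<n]" i] permutes_in_image[OF fp] that fp by auto
  have W: "W \<in> carrier_mat n n" using Wu by (rule unitary_carrier)
  have P: "perm_matrix n f \<in> carrier_mat n n" by (simp add: perm_matrix_def)
  have "diag_matrix n (\<lambda>i. complex_of_real (p ! i)) = diag_matrix n (\<lambda>i. complex_of_real (r (f i)))"
    by (rule eq_matI) (auto simp: pi)
  then have "W * perm_matrix n f * diag_matrix n (\<lambda>i. complex_of_real (p ! i)) * adj (W * perm_matrix n f)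
     = W * (perm_matrix n f * diag_matrix n (\<lambda>i. complex_of_real (r (f i))) * adj (perm_matrix n f)) * adj W"
    using W P by (simp add: adj_mult[OF W P] assoc_mult_mat[of _ n n _ n _ n] mult_carrier_mat[of _ n n _ n])
  also have "\<dots> = A" using perm_matrix_conj_diag[OF fb, of "\<lambda>i. complex_of_real (r i)"] Aeq by simp
  finally show "\<exists>W. unitary_op n W \<and> A = W * diag_matrix n (\<lambda>i. complex_of_real (p ! i)) * adj W"
    using unitary_mult[OF Wu unitary_perm_matrix[OF fb]] by metis
qed

lemma psd_conj_diag_nonneg:
  assumes Wu: "unitary_op n W" and Aeq: "A = W * diag_matrix n (\<lambda>i. complex_of_real (q i)) * adj W"
    and psd: "\<forall>v \<in> carrier_vec n. 0 \<le> Re (conjugate v \<bullet> (A *\<^sub>v v))" and i: "i < n"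
  shows "q i \<ge> 0"
proof -
  have W: "W \<in> carrier_mat n n" using Wu unitary_carrier by blast
  define D where "D = diag_matrix n (\<lambda>i. complex_of_real (q i))"
  have D: "D \<in> carrier_mat n n" by (simp add: D_def)
  define v where "v = col W i"
  have v: "v \<in> carrier_vec n" using W by (simp add: v_def carrier_vecI)
  have AW: "A * W = W * D"
  proof -
    have "A * W = W * D * (adj W * W)" unfolding Aeq D_def using W
      by (simp add: assoc_mult_mat[of _ n n _ n _ n] mult_carrier_mat[of _ n n _ n])
    also have "\<dots> = W * D" using unitary_left[OF Wu] W D by simp
    finally show ?thesis .
  qed
  have Av: "A *\<^sub>v v = complex_of_real (q i) \<cdot>\<^sub>v v"
  proof (rule eq_vecI)
    show "dim_vec (A *\<^sub>v v) = dim_vec (complex_of_real (q i) \<cdot>\<^sub>v v)" using v Aeq W by simp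
    fix k assume "k < dim_vec (complex_of_real (q i) \<cdot>\<^sub>v v)"
    then have k: "k < n" using v by simp
    have "(A *\<^sub>v v) $ k = (A * W) $$ (k, i)" using k i W Aeq by (simp add: v_def)
    also have "\<dots> = (W * D) $$ (k, i)" by (simp add: AW)
    also have "\<dots> = (\<Sum>l<n. W $$ (k, l) * D $$ (l, i))" by (rule mult_mat_index_sum[OF W D k i])
    also have "\<dots> = W $$ (k, i) * complex_of_real (q i)"
      using i by (simp add: D_def if_distrib cong: if_cong)
    finally show "(A *\<^sub>v v) $ k = (complex_of_real (q i) \<cdot>\<^sub>v v) $ k" using k i W by (simp add: v_def)
  qed
  have vv: "conjugate v \<bullet> v = 1"
  proof -
    have "conjugate v \<bullet> v = (\<Sum>k<n. cnj (W $$ (k, i)) * W $$ (k, i))"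
      using v W i by (simp add: scalar_prod_def v_def atLeast0LessThan)
    also have "\<dots> = (adj W * W) $$ (i, i)"
      using W i by (subst mult_mat_index_sum[OF adj_carrier[OF W] W]) auto
    also have "\<dots> = 1" using unitary_left[OF Wu] i by simp
    finally show ?thesis .
  qed
  have "conjugate v \<bullet> (A *\<^sub>v v) = complex_of_real (q i)"
    unfolding Av using v by (simp add: vv)
  then show ?thesis using psd v by force
qed

lemma hermitian_diagonalisation_sorted:
  assumes A: "A \<in> carrier_mat n n" and h: "adj A = A"
  obtains V rs where "unitary_op n V" "length rs = n" "sorted_wrt (\<ge>) rs"
    "A = V * diag_matrix n (\<lambda>i. complex_of_real (rs ! i)) * adj V"
proof -
  obtain V0 r0 where V0u: "unitary_op n V0"
    and Aeq: "A = V0 * diag_matrix n (\<lambda>i. complex_of_real (r0 i)) * adj V0"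
    using hermitian_spectral[OF A h] by blast
  define rs where "rs = rev (sort (map r0 [0..<n]))"
  have "mset (map complex_of_real rs) = mset (map (\<lambda>i. complex_of_real (r0 i)) [0..<n])"
  proof -
    have "image_mset complex_of_real (mset rs) = image_mset complex_of_real (mset (map r0 [0..<n]))"
      by (simp add: rs_def)
    then show ?thesis by (simp add: multiset.map_comp comp_def)
  qed
  also have "\<dots> = proots (char_poly A)" using proots_char_poly_conj_diag[OF V0u] Aeq by simp
  finally have rs: "mset (map complex_of_real rs) = proots (char_poly A)" .
  have "sorted_wrt (\<ge>) rs"
    unfolding rs_def sorted_wrt_rev using sorted_sort[of "map r0 [0..<n]"] by simp
  then show ?thesis
    using hermitian_diagonalisation_eigenvalue_list[OF A h rs] that by blast
qed

lemma xlogx_tangent: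
  fixes \<beta> x y :: real
  assumes b: "\<beta> > 1" and x: "x > 0" and y: "y \<ge> 0"
  shows "y * log \<beta> y \<ge> x * log \<beta> x + (log \<beta> x + 1 / ln \<beta>) * (y - x)"
proof -
  have lb: "ln \<beta> > 0" using b by simp
  have key: "y * ln y \<ge> x * ln x + (ln x + 1) * (y - x)"
  proof (cases "y = 0")
    case True then show ?thesis using x by simp
  next
    case False
    then have yp: "y > 0" using y by simp
    have "ln (x / y) \<le> x / y - 1" using x yp by (intro ln_le_minus_one) auto
    then have "ln x - ln y \<le> x / y - 1" using x yp by (simp add: ln_div)
    then have "y * (ln x - ln y) \<le> y * (x / y - 1)" using yp by (intro mult_left_mono) auto
    moreover have "y * (x / y - 1) = x - y" using yp by (simp add: field_simps)
    ultimately have "y * (ln x - ln y) \<le> x - y" by simp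
    then show ?thesis by (simp add: algebra_simps)
  qed
  have "x * log \<beta> x + (log \<beta> x + 1 / ln \<beta>) * (y - x) = (x * ln x + (ln x + 1) * (y - x)) / ln \<beta>"
    using lb by (simp add: log_def field_simps)
  also have "\<dots> \<le> (y * ln y) / ln \<beta>" using key lb by (intro divide_right_mono) auto
  also have "\<dots> = y * log \<beta> y" by (simp add: log_def)
  finally show ?thesis .
qed

lemma abel_sum_ge:
  fixes g d :: "nat \<Rightarrow> real"
  assumes mono: "\<And>i j. i \<le> j \<Longrightarrow> j \<le> n \<Longrightarrow> g j \<le> g i"
    and D: "\<And>m. m \<le> Suc n \<Longrightarrow> 0 \<le> (\<Sum>i<m. d i)"
  shows "(\<Sum>i<Suc n. g i * d i) \<ge> g n * (\<Sum>i<Suc n. d i)"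
  using assms
proof (induction n)
  case 0 then show ?case by simp
next
  case (Suc n)
  have IH: "(\<Sum>i<Suc n. g i * d i) \<ge> g n * (\<Sum>i<Suc n. d i)"
    using Suc.prems by (intro Suc.IH) auto
  have "g (Suc n) * (\<Sum>i<Suc n. d i) \<le> g n * (\<Sum>i<Suc n. d i)"
    using Suc.prems(1)[of n "Suc n"] Suc.prems(2)[of "Suc n"] by (intro mult_right_mono) auto
  then show ?case using IH by (simp add: algebra_simps)
qed

text \<open>Karamata's inequality for \<open>x log x\<close>, in the form where only the dominated sequence
  is sorted: tangent lines at \<open>r i\<close> and Abel summation.\<close>

lemma sum_xlogx_le_of_majorised_pos:
  fixes r Q :: "nat \<Rightarrow> real"
  assumes b: "\<beta> > 1"
    and rpos: "\<And>i. i < n \<Longrightarrow> r i > 0" and Qnn: "\<And>i. i < n \<Longrightarrow> Q i \<ge> 0"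
    and rdesc: "\<And>i j. i \<le> j \<Longrightarrow> j < n \<Longrightarrow> r j \<le> r i"
    and part: "\<And>m. m \<le> n \<Longrightarrow> (\<Sum>i<m. r i) \<le> (\<Sum>i<m. Q i)"
    and tot: "(\<Sum>i<n. r i) = (\<Sum>i<n. Q i)"
  shows "(\<Sum>i<n. r i * log \<beta> (r i)) \<le> (\<Sum>i<n. Q i * log \<beta> (Q i))"
proof (cases n)
  case 0 then show ?thesis by simp
next
  case (Suc n')
  define g where "g i = log \<beta> (r i) + 1 / ln \<beta>" for i
  have tan: "Q i * log \<beta> (Q i) - r i * log \<beta> (r i) \<ge> g i * (Q i - r i)" if "i < n" for i
    using xlogx_tangent[OF b rpos[OF that] Qnn[OF that]] unfolding g_def by simp
  have "(\<Sum>i<Suc n'. g i * (Q i - r i)) \<ge> g n' * (\<Sum>i<Suc n'. Q i - r i)"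
  proof (rule abel_sum_ge)
    show "g j \<le> g i" if "i \<le> j" "j \<le> n'" for i j
      using rdesc[of i j] that rpos[of j] Suc b unfolding g_def by simp
    show "0 \<le> (\<Sum>i<m. Q i - r i)" if "m \<le> Suc n'" for m
      using part[of m] that Suc by (simp add: sum_subtractf)
  qed
  moreover have "(\<Sum>i<Suc n'. Q i - r i) = 0" using tot Suc by (simp add: sum_subtractf)
  ultimately have "(\<Sum>i<n. g i * (Q i - r i)) \<ge> 0" using Suc by simp
  also have "(\<Sum>i<n. g i * (Q i - r i)) \<le> (\<Sum>i<n. Q i * log \<beta> (Q i) - r i * log \<beta> (r i))"
    by (intro sum_mono tan) auto
  finally show ?thesis by (simp add: sum_subtractf)
qed

lemma sum_xlogx_le_of_majorised:
  fixes r Q :: "nat \<Rightarrow> real"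
  assumes b: "\<beta> > 1"
    and rnn: "\<And>i. i < n \<Longrightarrow> r i \<ge> 0" and Qnn: "\<And>i. i < n \<Longrightarrow> Q i \<ge> 0"
    and rdesc: "\<And>i j. i \<le> j \<Longrightarrow> j < n \<Longrightarrow> r j \<le> r i"
    and part: "\<And>m. m \<le> n \<Longrightarrow> (\<Sum>i<m. r i) \<le> (\<Sum>i<m. Q i)"
    and tot: "(\<Sum>i<n. r i) = (\<Sum>i<n. Q i)"
  shows "(\<Sum>i<n. r i * log \<beta> (r i)) \<le> (\<Sum>i<n. Q i * log \<beta> (Q i))"
proof -
  define k where "k = (if \<exists>i<n. r i = 0 then (LEAST i. i < n \<and> r i = 0) else n)"
  have kn: "k \<le> n" unfolding k_def by (auto intro: Least_le[THEN order_trans] dest: LeastI_ex)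
  have rposk: "r i > 0" if "i < k" for i
  proof -
    have "i < n" using that kn by simp
    moreover have "r i \<noteq> 0"
    proof
      assume "r i = 0"
      then have "(LEAST i. i < n \<and> r i = 0) \<le> i" using \<open>i < n\<close> by (intro Least_le) auto
      moreover have "\<exists>i<n. r i = 0" using \<open>i < n\<close> \<open>r i = 0\<close> by blast
      ultimately show False using that unfolding k_def by simp
    qed
    ultimately show ?thesis using rnn[of i] by simp
  qed
  have rzero: "r i = 0" if "k \<le> i" "i < n" for i
  proof -
    have "\<exists>i<n. r i = 0" using that kn unfolding k_def by (auto split: if_splits)
    then have "\<exists>i. i < n \<and> r i = 0" by blast
    from LeastI_ex[OF this] have kk: "k < n \<and> r k = 0" unfolding k_def using \<open>\<exists>i<n. r i = 0\<close> by simp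
    then show ?thesis using rdesc[of k i] rnn[of i] that by simp
  qed
  have split: "(\<Sum>i<n. f i) = (\<Sum>i<k. f i) + (\<Sum>i\<in>{k..<n}. f i)" for f :: "nat \<Rightarrow> real"
    using kn by (metis atLeast0LessThan sum.atLeastLessThan_concat zero_le)
  have rtail: "(\<Sum>i\<in>{k..<n}. r i) = 0" using rzero by simp
  have "(\<Sum>i\<in>{k..<n}. Q i) \<le> 0"
    using part[OF kn] tot split[of r] split[of Q] rtail by linarith
  moreover have "(\<Sum>i\<in>{k..<n}. Q i) \<ge> 0" using Qnn by (intro sum_nonneg) auto
  ultimately have s0: "(\<Sum>i\<in>{k..<n}. Q i) = 0" by simp
  have Qzero: "Q i = 0" if "k \<le> i" "i < n" for i
    using that Qnn sum_nonneg_eq_0_iff[of "{k..<n}" Q] s0 by auto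
  have "(\<Sum>i<k. r i * log \<beta> (r i)) \<le> (\<Sum>i<k. Q i * log \<beta> (Q i))"
  proof (rule sum_xlogx_le_of_majorised_pos[OF b])
    show "(\<Sum>i<k. r i) = (\<Sum>i<k. Q i)"
      using tot split[of r] split[of Q] rtail Qzero by simp
  qed (use rposk Qnn rdesc part kn in auto)
  then show ?thesis using split[of "\<lambda>i. r i * log \<beta> (r i)"] split[of "\<lambda>i. Q i * log \<beta> (Q i)"]
    rzero Qzero by simp
qed

lemma weighted_sum_le_prefix_sum:
  fixes a w :: "nat \<Rightarrow> real"
  assumes adesc: "\<And>i j. i \<le> j \<Longrightarrow> j < n \<Longrightarrow> a j \<le> a i"
    and ann: "\<And>i. i < n \<Longrightarrow> a i \<ge> 0"
    and w01: "\<And>i. i < n \<Longrightarrow> 0 \<le> w i \<and> w i \<le> 1"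
    and wsum: "(\<Sum>i<n. w i) \<le> real T" and Tn: "T \<le> n"
  shows "(\<Sum>i<n. a i * w i) \<le> (\<Sum>i<T. a i)"
proof (cases "T = n")
  case True
  have "a i * w i \<le> a i" if "i < n" for i using w01[OF that] ann[OF that] by (simp add: mult_left_le)
  then show ?thesis unfolding True by (intro sum_mono) auto
next
  case False
  then have Tl: "T < n" using Tn by simp
  have split: "(\<Sum>i<n. f i) = (\<Sum>i<T. f i) + (\<Sum>i\<in>{T..<n}. f i)" for f :: "nat \<Rightarrow> real"
    using Tn by (metis atLeast0LessThan sum.atLeastLessThan_concat zero_le)
  have s1: "(\<Sum>i<T. a i * w i) \<le> (\<Sum>i<T. a i + a T * (w i - 1))"
  proof (rule sum_mono)
    fix i assume "i \<in> {..<T}"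
    then have "a T \<le> a i" "w i - 1 \<le> 0" using adesc[of i T] Tl w01[of i] by auto
    then have "a i * (w i - 1) \<le> a T * (w i - 1)" by (intro mult_right_mono_neg) auto
    then show "a i * w i \<le> a i + a T * (w i - 1)" by (simp add: algebra_simps)
  qed
  have s2: "(\<Sum>i\<in>{T..<n}. a i * w i) \<le> (\<Sum>i\<in>{T..<n}. a T * w i)"
  proof (rule sum_mono)
    fix i assume "i \<in> {T..<n}"
    then show "a i * w i \<le> a T * w i" using adesc[of T i] w01[of i] by (intro mult_right_mono) auto
  qed
  have "(\<Sum>i<n. a i * w i) \<le> (\<Sum>i<T. a i) + a T * ((\<Sum>i<T. w i) - T + (\<Sum>i\<in>{T..<n}. w i))"
    using s1 s2 split[of "\<lambda>i. a i * w i"]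
    by (simp add: sum.distrib sum_distrib_left[symmetric] sum_subtractf algebra_simps)
  also have "\<dots> \<le> (\<Sum>i<T. a i)"
    using split[of w] wsum ann[of T] Tl by (simp add: mult_nonneg_nonpos)
  finally show ?thesis .
qed

section \<open>Partial trace over a labelling of the basis\<close>

text \<open>Basis vector \<open>a < d\<close> of the big space is identified with the pair \<open>(\<beta> a, \<kappa> a)\<close> of a
  basis index of the kept factor and a label of the traced-out factor; when this labelling is
  injective, \<open>label_ptrace\<close> is the partial trace over the labels.\<close>

definition label_ptrace :: "nat \<Rightarrow> nat \<Rightarrow> (nat \<Rightarrow> nat) \<Rightarrow> (nat \<Rightarrow> 'k) \<Rightarrow> complex mat \<Rightarrow> complex mat" where
  "label_ptrace d n \<beta> \<kappa> \<sigma> = mat n n (\<lambda>(i,j). \<Sum>a<d. \<Sum>b<d.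
      if \<beta> a = i \<and> \<beta> b = j \<and> \<kappa> a = \<kappa> b then \<sigma> $$ (a, b) else 0)"

lemma label_ptrace_carrier [simp]: "label_ptrace d n \<beta> \<kappa> \<sigma> \<in> carrier_mat n n"
  by (simp add: label_ptrace_def)

lemma label_ptrace_index: "i < n \<Longrightarrow> j < n \<Longrightarrow> label_ptrace d n \<beta> \<kappa> \<sigma> $$ (i, j) = (\<Sum>a<d. \<Sum>b<d.
      if \<beta> a = i \<and> \<beta> b = j \<and> \<kappa> a = \<kappa> b then \<sigma> $$ (a, b) else 0)"
  by (simp add: label_ptrace_def)

lemma label_ptrace_diag: "label_ptrace d n \<beta> \<kappa> (diag_matrix d h) = diag_matrix n (\<lambda>i. \<Sum>a\<in>{a. a < d \<and> \<beta> a = i}. h a)"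
proof (rule eq_matI)
  fix i j assume "i < dim_row (diag_matrix n (\<lambda>i. \<Sum>a\<in>{a. a < d \<and> \<beta> a = i}. h a))"
    "j < dim_col (diag_matrix n (\<lambda>i. \<Sum>a\<in>{a. a < d \<and> \<beta> a = i}. h a))"
  then have ij: "i < n" "j < n" by auto
  have "label_ptrace d n \<beta> \<kappa> (diag_matrix d h) $$ (i, j) = (\<Sum>a<d. if \<beta> a = i \<and> \<beta> a = j then h a else 0)"
    unfolding label_ptrace_index[OF ij]
  proof (rule sum.cong[OF refl])
    fix a assume a: "a \<in> {..<d}"
    have "(\<Sum>b<d. if \<beta> a = i \<and> \<beta> b = j \<and> \<kappa> a = \<kappa> b then diag_matrix d h $$ (a, b) else 0)
        = (\<Sum>b<d. if b = a then (if \<beta> a = i \<and> \<beta> a = j then h a else 0) else 0)"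
      using a by (intro sum.cong) auto
    also have "\<dots> = (if \<beta> a = i \<and> \<beta> a = j then h a else 0)" using a by simp
    finally show "(\<Sum>b<d. if \<beta> a = i \<and> \<beta> b = j \<and> \<kappa> a = \<kappa> b then diag_matrix d h $$ (a, b) else 0)
        = (if \<beta> a = i \<and> \<beta> a = j then h a else 0)" .
  qed
  also have "\<dots> = diag_matrix n (\<lambda>i. \<Sum>a\<in>{a. a < d \<and> \<beta> a = i}. h a) $$ (i, j)"
  proof (cases "i = j")
    case True
    have "(\<Sum>a<d. if \<beta> a = i \<and> \<beta> a = j then h a else 0) = (\<Sum>a\<in>{a\<in>{..<d}. \<beta> a = i \<and> \<beta> a = j}. h a)"
      by (rule sum.mono_neutral_cong_right) auto
    also have "{a\<in>{..<d}. \<beta> a = i \<and> \<beta> a = j} = {a. a < d \<and> \<beta> a = i}" using True by auto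
    finally show ?thesis using ij True by simp
  next
    case False
    have "(\<Sum>a<d. if \<beta> a = i \<and> \<beta> a = j then h a else 0) = 0" using False by (intro sum.neutral) auto
    then show ?thesis using ij False by simp
  qed
  finally show "label_ptrace d n \<beta> \<kappa> (diag_matrix d h) $$ (i, j) = diag_matrix n (\<lambda>i. \<Sum>a\<in>{a. a < d \<and> \<beta> a = i}. h a) $$ (i, j)" .
qed (auto simp: label_ptrace_def)

lemma sum_same_label_eq_norm_sq:
  fixes z :: "nat \<Rightarrow> complex" and \<kappa> :: "nat \<Rightarrow> 'k"
  assumes A: "finite A"
  shows "(\<Sum>a\<in>A. \<Sum>b\<in>A. if \<kappa> a = \<kappa> b then z a * cnj (z b) else 0)
     = complex_of_real (\<Sum>k\<in>\<kappa> ` A. (cmod (\<Sum>a\<in>{a\<in>A. \<kappa> a = k}. z a))\<^sup>2)"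
proof -
  define Z where "Z k = (\<Sum>a\<in>{a\<in>A. \<kappa> a = k}. z a)" for k
  have "(\<Sum>a\<in>A. \<Sum>b\<in>A. if \<kappa> a = \<kappa> b then z a * cnj (z b) else 0) = (\<Sum>a\<in>A. z a * cnj (Z (\<kappa> a)))"
  proof (rule sum.cong[OF refl])
    fix a assume "a \<in> A"
    have "(\<Sum>b\<in>A. if \<kappa> a = \<kappa> b then z a * cnj (z b) else 0) = (\<Sum>b\<in>{b\<in>A. \<kappa> a = \<kappa> b}. z a * cnj (z b))"
      by (simp add: sum.inter_filter[OF A])
    also have "\<dots> = (\<Sum>b\<in>{b\<in>A. \<kappa> b = \<kappa> a}. z a * cnj (z b))" by (rule sum.cong) auto
    also have "\<dots> = z a * cnj (Z (\<kappa> a))" by (simp add: Z_def sum_distrib_left cnj_sum)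
    finally show "(\<Sum>b\<in>A. if \<kappa> a = \<kappa> b then z a * cnj (z b) else 0) = z a * cnj (Z (\<kappa> a))" .
  qed
  also have "\<dots> = (\<Sum>k\<in>\<kappa> ` A. \<Sum>a\<in>{a\<in>A. \<kappa> a = k}. z a * cnj (Z (\<kappa> a)))"
    by (rule sum.image_gen[OF A])
  also have "\<dots> = (\<Sum>k\<in>\<kappa> ` A. Z k * cnj (Z k))"
    by (intro sum.cong refl) (simp add: Z_def sum_distrib_right)
  also have "\<dots> = (\<Sum>k\<in>\<kappa> ` A. complex_of_real ((cmod (Z k))\<^sup>2))"
    by (intro sum.cong refl) (metis complex_norm_square)
  also have "\<dots> = complex_of_real (\<Sum>k\<in>\<kappa> ` A. (cmod (Z k))\<^sup>2)" by (simp only: of_real_sum)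
  finally show ?thesis unfolding Z_def .
qed

text \<open>Overlap of the \<open>t\<close>-th column of \<open>X\<close> with the \<open>j\<close>-th column of \<open>V\<close> through the partial
  trace: if \<open>X\<close> diagonalises \<open>\<sigma>\<close> with eigenvalues \<open>p\<close> and \<open>V\<close> diagonalises its partial trace
  with eigenvalues \<open>r\<close>, then \<open>r j = (\<Sum>t. p t * label_ptrace_weight \<dots> t j)\<close>.\<close>

definition label_ptrace_weight :: "nat \<Rightarrow> (nat \<Rightarrow> nat) \<Rightarrow> (nat \<Rightarrow> 'k) \<Rightarrow> complex mat \<Rightarrow> complex mat \<Rightarrow> nat \<Rightarrow> nat \<Rightarrow> real" where
  "label_ptrace_weight d \<beta> \<kappa> X V t j = (\<Sum>k\<in>\<kappa> ` {..<d}. (cmod (\<Sum>a\<in>{a\<in>{..<d}. \<kappa> a = k}. cnj (V $$ (\<beta> a, j)) * X $$ (a, t)))\<^sup>2)"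

lemma label_ptrace_weight_nonneg: "label_ptrace_weight d \<beta> \<kappa> X V t j \<ge> 0"
  unfolding label_ptrace_weight_def by (intro sum_nonneg) auto

lemma label_ptrace_weight_complex: "complex_of_real (label_ptrace_weight d \<beta> \<kappa> X V t j) =
   (\<Sum>a<d. \<Sum>b<d. if \<kappa> a = \<kappa> b then (cnj (V $$ (\<beta> a, j)) * X $$ (a, t)) * cnj (cnj (V $$ (\<beta> b, j)) * X $$ (b, t)) else 0)"
  unfolding label_ptrace_weight_def by (rule sum_same_label_eq_norm_sq[symmetric]) simp

lemma sum_label_ptrace_bilinear:
  fixes x y :: "nat \<Rightarrow> complex" and s :: "nat \<Rightarrow> nat \<Rightarrow> complex"
  assumes bl: "\<And>a. a < d \<Longrightarrow> \<beta> a < n"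
  shows "(\<Sum>i<n. \<Sum>i'<n. x i * (\<Sum>a<d. \<Sum>b<d. if \<beta> a = i \<and> \<beta> b = i' \<and> \<kappa> a = \<kappa> b then s a b else 0) * y i')
       = (\<Sum>a<d. \<Sum>b<d. if \<kappa> a = \<kappa> b then x (\<beta> a) * s a b * y (\<beta> b) else 0)"
proof -
  have "(\<Sum>i<n. \<Sum>i'<n. x i * (\<Sum>a<d. \<Sum>b<d. if \<beta> a = i \<and> \<beta> b = i' \<and> \<kappa> a = \<kappa> b then s a b else 0) * y i')
     = (\<Sum>i<n. \<Sum>i'<n. \<Sum>a<d. \<Sum>b<d. if i = \<beta> a then (if i' = \<beta> b then (if \<kappa> a = \<kappa> b then x i * s a b * y i' else 0) else 0) else 0)"
  proof (intro sum.cong refl)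
    fix i i'
    have pt: "x i * (if \<beta> a = i \<and> \<beta> b = i' \<and> \<kappa> a = \<kappa> b then s a b else 0) * y i'
        = (if i = \<beta> a then (if i' = \<beta> b then (if \<kappa> a = \<kappa> b then x i * s a b * y i' else 0) else 0) else 0)" for a b
      by auto
    have "x i * (\<Sum>a<d. \<Sum>b<d. if \<beta> a = i \<and> \<beta> b = i' \<and> \<kappa> a = \<kappa> b then s a b else 0) * y i'
      = (\<Sum>a<d. \<Sum>b<d. x i * (if \<beta> a = i \<and> \<beta> b = i' \<and> \<kappa> a = \<kappa> b then s a b else 0) * y i')"
      by (simp only: sum_distrib_left sum_distrib_right)
    also have "\<dots> = (\<Sum>a<d. \<Sum>b<d. if i = \<beta> a then (if i' = \<beta> b then (if \<kappa> a = \<kappa> b then x i * s a b * y i' else 0) else 0) else 0)"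
      by (simp only: pt)
    finally show "x i * (\<Sum>a<d. \<Sum>b<d. if \<beta> a = i \<and> \<beta> b = i' \<and> \<kappa> a = \<kappa> b then s a b else 0) * y i'
      = (\<Sum>a<d. \<Sum>b<d. if i = \<beta> a then (if i' = \<beta> b then (if \<kappa> a = \<kappa> b then x i * s a b * y i' else 0) else 0) else 0)" .
  qed
  also have "\<dots> = (\<Sum>i<n. \<Sum>a<d. \<Sum>i'<n. \<Sum>b<d. (if i = \<beta> a then (if i' = \<beta> b then (if \<kappa> a = \<kappa> b then x i * s a b * y i' else 0) else 0) else 0))"
    by (rule sum.cong[OF refl], rule sum.swap)
  also have "\<dots> = (\<Sum>a<d. \<Sum>i<n. \<Sum>i'<n. \<Sum>b<d. (if i = \<beta> a then (if i' = \<beta> b then (if \<kappa> a = \<kappa> b then x i * s a b * y i' else 0) else 0) else 0))"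
    by (rule sum.swap)
  also have "\<dots> = (\<Sum>a<d. \<Sum>i<n. \<Sum>b<d. \<Sum>i'<n. (if i = \<beta> a then (if i' = \<beta> b then (if \<kappa> a = \<kappa> b then x i * s a b * y i' else 0) else 0) else 0))"
    by (rule sum.cong[OF refl], rule sum.cong[OF refl], rule sum.swap)
  also have "\<dots> = (\<Sum>a<d. \<Sum>b<d. \<Sum>i<n. \<Sum>i'<n. (if i = \<beta> a then (if i' = \<beta> b then (if \<kappa> a = \<kappa> b then x i * s a b * y i' else 0) else 0) else 0))"
    by (rule sum.cong[OF refl], rule sum.swap)
  also have "\<dots> = (\<Sum>a<d. \<Sum>b<d. if \<kappa> a = \<kappa> b then x (\<beta> a) * s a b * y (\<beta> b) else 0)"
  proof (intro sum.cong refl)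
    fix a b assume a: "a \<in> {..<d}" and b: "b \<in> {..<d}"
    define K where "K i i' = (if \<kappa> a = \<kappa> b then x i * s a b * y i' else 0)" for i i'
    have "(\<Sum>i<n. \<Sum>i'<n. if i = \<beta> a then (if i' = \<beta> b then K i i' else 0) else 0)
        = (\<Sum>i<n. if i = \<beta> a then K i (\<beta> b) else 0)"
      using bl b by (intro sum.cong refl) auto
    also have "\<dots> = K (\<beta> a) (\<beta> b)" using bl a by auto
    finally show "(\<Sum>i<n. \<Sum>i'<n. if i = \<beta> a then (if i' = \<beta> b then (if \<kappa> a = \<kappa> b then x i * s a b * y i' else 0) else 0) else 0)
       = (if \<kappa> a = \<kappa> b then x (\<beta> a) * s a b * y (\<beta> b) else 0)" unfolding K_def .
  qed
  finally show ?thesis .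
qed

lemma sum_swap3: "(\<Sum>j\<in>J. \<Sum>a\<in>A. \<Sum>b\<in>B. f j a b) = (\<Sum>a\<in>A. \<Sum>b\<in>B. \<Sum>j\<in>J. f j a b)"
  by (subst sum.swap) (rule sum.cong[OF refl], rule sum.swap)

lemma conj_adj_diagonal_entry:
  assumes V: "V \<in> carrier_mat n n" and T: "T \<in> carrier_mat n n" and j: "j < n"
  shows "(adj V * T * V) $$ (j, j) = (\<Sum>i<n. \<Sum>i'<n. cnj (V $$ (i, j)) * T $$ (i, i') * V $$ (i', j))"
proof -
  have aT: "adj V * T \<in> carrier_mat n n" using V T by auto
  have "(adj V * T * V) $$ (j, j) = (\<Sum>i'<n. (adj V * T) $$ (j, i') * V $$ (i', j))"
    using j by (rule mult_mat_index_sum[OF aT V j])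
  also have "\<dots> = (\<Sum>i'<n. (\<Sum>i<n. cnj (V $$ (i, j)) * T $$ (i, i')) * V $$ (i', j))"
    using V T j by (intro sum.cong refl) (subst mult_mat_index_sum[OF adj_carrier[OF V] T], auto)
  also have "\<dots> = (\<Sum>i'<n. \<Sum>i<n. cnj (V $$ (i, j)) * T $$ (i, i') * V $$ (i', j))"
    by (simp add: sum_distrib_right)
  also have "\<dots> = (\<Sum>i<n. \<Sum>i'<n. cnj (V $$ (i, j)) * T $$ (i, i') * V $$ (i', j))"
    by (rule sum.swap)
  finally show ?thesis .
qed

lemma label_ptrace_eigenvalue_weighted:
  assumes Xu: "unitary_op d X" and Vu: "unitary_op n V" and bl: "\<And>a. a < d \<Longrightarrow> \<beta> a < n"
    and teq: "label_ptrace d n \<beta> \<kappa> (X * diag_matrix d (\<lambda>t. complex_of_real (p t)) * adj X) = V * diag_matrix n (\<lambda>j. complex_of_real (r j)) * adj V"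
    and j: "j < n"
  shows "r j = (\<Sum>t<d. p t * label_ptrace_weight d \<beta> \<kappa> X V t j)"
proof -
  have X: "X \<in> carrier_mat d d" using Xu unitary_carrier by blast
  have V: "V \<in> carrier_mat n n" using Vu unitary_carrier by blast
  define \<sigma> where "\<sigma> = X * diag_matrix d (\<lambda>t. complex_of_real (p t)) * adj X"
  define \<tau> where "\<tau> = label_ptrace d n \<beta> \<kappa> \<sigma>"
  have "complex_of_real (r j) = diag_matrix n (\<lambda>j. complex_of_real (r j)) $$ (j, j)" using j by simp
  also have "\<dots> = (adj V * \<tau> * V) $$ (j, j)"
    unfolding \<tau>_def \<sigma>_def teq unitary_conj_cancel[OF Vu diag_matrix_carrier(1)] ..
  also have "\<dots> = (\<Sum>i<n. \<Sum>i'<n. cnj (V $$ (i, j)) * \<tau> $$ (i, i') * V $$ (i', j))"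
    by (rule conj_adj_diagonal_entry[OF V _ j]) (simp add: \<tau>_def)
  also have "\<dots> = (\<Sum>i<n. \<Sum>i'<n. cnj (V $$ (i, j)) * (\<Sum>a<d. \<Sum>b<d. if \<beta> a = i \<and> \<beta> b = i' \<and> \<kappa> a = \<kappa> b then \<sigma> $$ (a, b) else 0) * V $$ (i', j))"
    unfolding \<tau>_def by (intro sum.cong refl) (simp add: label_ptrace_index)
  also have "\<dots> = (\<Sum>a<d. \<Sum>b<d. if \<kappa> a = \<kappa> b then cnj (V $$ (\<beta> a, j)) * \<sigma> $$ (a, b) * V $$ (\<beta> b, j) else 0)"
    by (rule sum_label_ptrace_bilinear[OF bl])
  also have "\<dots> = (\<Sum>a<d. \<Sum>b<d. \<Sum>t<d. complex_of_real (p t) * (if \<kappa> a = \<kappa> b then (cnj (V $$ (\<beta> a, j)) * X $$ (a, t)) * cnj (cnj (V $$ (\<beta> b, j)) * X $$ (b, t)) else 0))"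
  proof (intro sum.cong refl)
    fix a b assume a: "a \<in> {..<d}" and b: "b \<in> {..<d}"
    have s: "\<sigma> $$ (a, b) = (\<Sum>t<d. X $$ (a, t) * complex_of_real (p t) * cnj (X $$ (b, t)))"
      unfolding \<sigma>_def using conj_diag_index[OF X] a b by simp
    show "(if \<kappa> a = \<kappa> b then cnj (V $$ (\<beta> a, j)) * \<sigma> $$ (a, b) * V $$ (\<beta> b, j) else 0)
      = (\<Sum>t<d. complex_of_real (p t) * (if \<kappa> a = \<kappa> b then (cnj (V $$ (\<beta> a, j)) * X $$ (a, t)) * cnj (cnj (V $$ (\<beta> b, j)) * X $$ (b, t)) else 0))"
      unfolding s by (simp add: sum_distrib_left sum_distrib_right ac_simps)
  qed
  also have "\<dots> = (\<Sum>t<d. complex_of_real (p t) * (\<Sum>a<d. \<Sum>b<d. (if \<kappa> a = \<kappa> b then (cnj (V $$ (\<beta> a, j)) * X $$ (a, t)) * cnj (cnj (V $$ (\<beta> b, j)) * X $$ (b, t)) else 0)))"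
    unfolding sum_distrib_left by (rule sum_swap3[symmetric])
  also have "\<dots> = (\<Sum>t<d. complex_of_real (p t) * complex_of_real (label_ptrace_weight d \<beta> \<kappa> X V t j))"
    by (simp only: label_ptrace_weight_complex)
  also have "\<dots> = complex_of_real (\<Sum>t<d. p t * label_ptrace_weight d \<beta> \<kappa> X V t j)" by simp
  finally show ?thesis by (simp only: of_real_eq_iff)
qed

lemma label_ptrace_weight_row_sum:
  assumes Xu: "unitary_op d X" and Vu: "unitary_op n V" and bl: "\<And>a. a < d \<Longrightarrow> \<beta> a < n"
    and inj: "inj_on (\<lambda>a. (\<beta> a, \<kappa> a)) {..<d}" and t: "t < d"
  shows "(\<Sum>j<n. label_ptrace_weight d \<beta> \<kappa> X V t j) = 1"
proof -
  have X: "X \<in> carrier_mat d d" using Xu unitary_carrier by blast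
  have V: "V \<in> carrier_mat n n" using Vu unitary_carrier by blast
  have "complex_of_real (\<Sum>j<n. label_ptrace_weight d \<beta> \<kappa> X V t j) = (\<Sum>j<n. \<Sum>a<d. \<Sum>b<d. if \<kappa> a = \<kappa> b then (cnj (V $$ (\<beta> a, j)) * X $$ (a, t)) * cnj (cnj (V $$ (\<beta> b, j)) * X $$ (b, t)) else 0)"
    by (simp only: of_real_sum label_ptrace_weight_complex)
  also have "\<dots> = (\<Sum>a<d. \<Sum>b<d. \<Sum>j<n. if \<kappa> a = \<kappa> b then (cnj (V $$ (\<beta> a, j)) * X $$ (a, t)) * cnj (cnj (V $$ (\<beta> b, j)) * X $$ (b, t)) else 0)"
    by (rule sum_swap3)
  also have "\<dots> = (\<Sum>a<d. \<Sum>b<d. if b = a then X $$ (a, t) * cnj (X $$ (b, t)) else 0)"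
  proof (intro sum.cong refl)
    fix a b assume a: "a \<in> {..<d}" and b: "b \<in> {..<d}"
    have vv: "(\<Sum>j<n. V $$ (\<beta> b, j) * cnj (V $$ (\<beta> a, j))) = (if \<beta> b = \<beta> a then 1 else 0)"
    proof -
      have "(\<Sum>j<n. V $$ (\<beta> b, j) * cnj (V $$ (\<beta> a, j))) = (V * adj V) $$ (\<beta> b, \<beta> a)"
        using a b bl V by (subst mult_mat_index_sum[OF V adj_carrier[OF V]]) auto
      also have "\<dots> = (if \<beta> b = \<beta> a then 1 else 0)" using unitary_right[OF Vu] a b bl by simp
      finally show ?thesis .
    qed
    have iff: "(\<kappa> a = \<kappa> b \<and> \<beta> b = \<beta> a) \<longleftrightarrow> b = a"
      using inj a b unfolding inj_on_def by auto
    have "(\<Sum>j<n. if \<kappa> a = \<kappa> b then (cnj (V $$ (\<beta> a, j)) * X $$ (a, t)) * cnj (cnj (V $$ (\<beta> b, j)) * X $$ (b, t)) else 0)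
        = (if \<kappa> a = \<kappa> b then X $$ (a, t) * cnj (X $$ (b, t)) * (\<Sum>j<n. V $$ (\<beta> b, j) * cnj (V $$ (\<beta> a, j))) else 0)"
      by (simp add: sum_distrib_left ac_simps)
    also have "\<dots> = (if b = a then X $$ (a, t) * cnj (X $$ (b, t)) else 0)"
      unfolding vv using iff by auto
    finally show "(\<Sum>j<n. if \<kappa> a = \<kappa> b then (cnj (V $$ (\<beta> a, j)) * X $$ (a, t)) * cnj (cnj (V $$ (\<beta> b, j)) * X $$ (b, t)) else 0)
        = (if b = a then X $$ (a, t) * cnj (X $$ (b, t)) else 0)" .
  qed
  also have "\<dots> = (\<Sum>a<d. X $$ (a, t) * cnj (X $$ (a, t)))" by simp
  also have "\<dots> = (adj X * X) $$ (t, t)"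
    using X t by (subst mult_mat_index_sum[OF adj_carrier[OF X] X]) (auto simp: ac_simps)
  also have "\<dots> = 1" using unitary_left[OF Xu] t by simp
  finally show ?thesis by (metis of_real_eq_1_iff)
qed

lemma label_ptrace_weight_col_sum:
  assumes Xu: "unitary_op d X" and bl: "\<And>a. a < d \<Longrightarrow> \<beta> a < n" and j: "j < n"
  shows "(\<Sum>t<d. label_ptrace_weight d \<beta> \<kappa> X V t j) = (\<Sum>a<d. (cmod (V $$ (\<beta> a, j)))\<^sup>2)"
proof -
  have X: "X \<in> carrier_mat d d" using Xu unitary_carrier by blast
  have "complex_of_real (\<Sum>t<d. label_ptrace_weight d \<beta> \<kappa> X V t j) = (\<Sum>t<d. \<Sum>a<d. \<Sum>b<d. if \<kappa> a = \<kappa> b then (cnj (V $$ (\<beta> a, j)) * X $$ (a, t)) * cnj (cnj (V $$ (\<beta> b, j)) * X $$ (b, t)) else 0)"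
    by (simp only: of_real_sum label_ptrace_weight_complex)
  also have "\<dots> = (\<Sum>a<d. \<Sum>b<d. \<Sum>t<d. if \<kappa> a = \<kappa> b then (cnj (V $$ (\<beta> a, j)) * X $$ (a, t)) * cnj (cnj (V $$ (\<beta> b, j)) * X $$ (b, t)) else 0)"
    by (rule sum_swap3)
  also have "\<dots> = (\<Sum>a<d. \<Sum>b<d. if b = a then cnj (V $$ (\<beta> a, j)) * V $$ (\<beta> b, j) else 0)"
  proof (intro sum.cong refl)
    fix a b assume a: "a \<in> {..<d}" and b: "b \<in> {..<d}"
    have xx: "(\<Sum>t<d. X $$ (a, t) * cnj (X $$ (b, t))) = (if a = b then 1 else 0)"
    proof -
      have "(\<Sum>t<d. X $$ (a, t) * cnj (X $$ (b, t))) = (X * adj X) $$ (a, b)"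
        using a b X by (subst mult_mat_index_sum[OF X adj_carrier[OF X]]) auto
      also have "\<dots> = (if a = b then 1 else 0)" using unitary_right[OF Xu] a b by simp
      finally show ?thesis .
    qed
    have "(\<Sum>t<d. if \<kappa> a = \<kappa> b then (cnj (V $$ (\<beta> a, j)) * X $$ (a, t)) * cnj (cnj (V $$ (\<beta> b, j)) * X $$ (b, t)) else 0)
        = (if \<kappa> a = \<kappa> b then cnj (V $$ (\<beta> a, j)) * V $$ (\<beta> b, j) * (\<Sum>t<d. X $$ (a, t) * cnj (X $$ (b, t))) else 0)"
      by (simp add: sum_distrib_left ac_simps)
    also have "\<dots> = (if b = a then cnj (V $$ (\<beta> a, j)) * V $$ (\<beta> b, j) else 0)"
      unfolding xx by auto
    finally show "(\<Sum>t<d. if \<kappa> a = \<kappa> b then (cnj (V $$ (\<beta> a, j)) * X $$ (a, t)) * cnj (cnj (V $$ (\<beta> b, j)) * X $$ (b, t)) else 0)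
        = (if b = a then cnj (V $$ (\<beta> a, j)) * V $$ (\<beta> b, j) else 0)" .
  qed
  also have "\<dots> = (\<Sum>a<d. cnj (V $$ (\<beta> a, j)) * V $$ (\<beta> a, j))" by simp
  also have "\<dots> = (\<Sum>a<d. complex_of_real ((cmod (V $$ (\<beta> a, j)))\<^sup>2))"
    by (intro sum.cong refl) (metis complex_norm_square mult.commute)
  also have "\<dots> = complex_of_real (\<Sum>a<d. (cmod (V $$ (\<beta> a, j)))\<^sup>2)" by (simp only: of_real_sum)
  finally show ?thesis by (simp only: of_real_eq_iff)
qed

lemma sum_over_fibres:
  fixes h :: "nat \<Rightarrow> real" and \<beta> :: "nat \<Rightarrow> nat" and d n :: nat
  assumes bl: "\<And>a. a < d \<Longrightarrow> \<beta> a < n"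
  shows "(\<Sum>a<d. h (\<beta> a)) = (\<Sum>i<n. real (card {a. a < d \<and> \<beta> a = i}) * h i)"
proof -
  have "(\<Sum>i<n. real (card {a. a < d \<and> \<beta> a = i}) * h i) = (\<Sum>i<n. \<Sum>a\<in>{a. a < d \<and> \<beta> a = i}. h i)"
    by simp
  also have "\<dots> = (\<Sum>i<n. \<Sum>a<d. if \<beta> a = i then h i else 0)"
    by (rule sum.cong[OF refl], rule sum.mono_neutral_cong_left) auto
  also have "\<dots> = (\<Sum>a<d. \<Sum>i<n. if \<beta> a = i then h i else 0)" by (rule sum.swap)
  also have "\<dots> = (\<Sum>a<d. h (\<beta> a))" using bl by (intro sum.cong refl) (simp add: sum.delta)
  finally show ?thesis by simp
qed

lemma label_ptrace_hermitian:
  assumes s: "\<sigma> \<in> carrier_mat d d" and h: "adj \<sigma> = \<sigma>"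
  shows "adj (label_ptrace d n \<beta> \<kappa> \<sigma>) = label_ptrace d n \<beta> \<kappa> \<sigma>"
proof (rule eq_matI)
  fix i j assume "i < dim_row (label_ptrace d n \<beta> \<kappa> \<sigma>)" "j < dim_col (label_ptrace d n \<beta> \<kappa> \<sigma>)"
  then have ij: "i < n" "j < n" by (auto simp: label_ptrace_def)
  have hs: "cnj (\<sigma> $$ (a, b)) = \<sigma> $$ (b, a)" if "a < d" "b < d" for a b
    by (metis h s that adj_index carrier_matD(1) carrier_matD(2))
  have "adj (label_ptrace d n \<beta> \<kappa> \<sigma>) $$ (i, j) = cnj (label_ptrace d n \<beta> \<kappa> \<sigma> $$ (j, i))" using ij by (simp add: label_ptrace_def)
  also have "\<dots> = (\<Sum>a<d. \<Sum>b<d. if \<beta> a = j \<and> \<beta> b = i \<and> \<kappa> a = \<kappa> b then \<sigma> $$ (b, a) else 0)"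
    using ij hs by (simp add: label_ptrace_index cnj_sum if_distrib cong: if_cong)
  also have "\<dots> = (\<Sum>b<d. \<Sum>a<d. if \<beta> a = j \<and> \<beta> b = i \<and> \<kappa> a = \<kappa> b then \<sigma> $$ (b, a) else 0)"
    by (rule sum.swap)
  also have "\<dots> = label_ptrace d n \<beta> \<kappa> \<sigma> $$ (i, j)" using ij
    by (simp add: label_ptrace_index) (intro sum.cong refl, metis)
  finally show "adj (label_ptrace d n \<beta> \<kappa> \<sigma>) $$ (i, j) = label_ptrace d n \<beta> \<kappa> \<sigma> $$ (i, j)" .
qed (auto simp: label_ptrace_def)

lemma sum_lessThan_add: "(\<Sum>t<x + y. h t) = (\<Sum>t<x. h t) + (\<Sum>a<y. h (x + a))" for h :: "nat \<Rightarrow> 'a::comm_monoid_add"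
  by (induction y) (simp_all add: add.assoc)

lemma image_add_lessThan: "(\<lambda>a. x + a) ` {..<y} = {x..<x + (y::nat)}"
  using image_add_atLeastLessThan[of x 0 y] by (simp add: add.commute lessThan_atLeast0)

lemma sum_atLeastLessThan_add: "(\<Sum>t\<in>{x..<x + y}. h t) = (\<Sum>a<y. h (x + a))" for h :: "nat \<Rightarrow> 'a::comm_monoid_add"
proof -
  have "{x..<x + y} = (\<lambda>a. x + a) ` {..<y}" by (simp add: image_add_lessThan)
  then show ?thesis by (simp add: sum.reindex inj_on_def)
qed

definition block_start :: "nat list \<Rightarrow> nat \<Rightarrow> nat" where
  "block_start g u = sum_list (take u g)"

lemma block_start_Suc: "u < length g \<Longrightarrow> block_start g (Suc u) = block_start g u + g ! u"
  by (simp add: block_start_def take_Suc_conv_app_nth)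

lemma block_start_le: "block_start g u \<le> sum_list g"
proof -
  have "sum_list (take u g) \<le> sum_list (take u g) + sum_list (drop u g)" by simp
  also have "\<dots> = sum_list g" by (metis append_take_drop_id sum_list_append)
  finally show ?thesis by (simp add: block_start_def)
qed

lemma block_start_mono: "u \<le> v \<Longrightarrow> block_start g u \<le> block_start g v"
  unfolding block_start_def by (metis append_take_drop_id le_add1 sum_list_append take_take min_absorb1)

lemma block_start_eq_sum: "m \<le> length g \<Longrightarrow> block_start g m = (\<Sum>u<m. g ! u)"
  by (induction m) (auto simp: block_start_def block_start_Suc take_Suc_conv_app_nth)

lemma block_start_length: "block_start g (length g) = sum_list g"
  by (simp add: block_start_def)

lemma sum_by_blocks:
  fixes h :: "nat \<Rightarrow> 'a::comm_monoid_add"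
  assumes "m \<le> length g"
  shows "(\<Sum>t<block_start g m. h t) = (\<Sum>u<m. \<Sum>a<g ! u. h (block_start g u + a))"
  using assms
proof (induction m)
  case 0 then show ?case by (simp add: block_start_def)
next
  case (Suc m)
  then show ?case by (simp add: block_start_Suc sum_lessThan_add)
qed

lemma blocks_bij_betw:
  assumes F: "\<And>u. u < length g \<Longrightarrow> finite (F u) \<and> card (F u) = g ! u"
    and disj: "\<And>u v. u < length g \<Longrightarrow> v < length g \<Longrightarrow> u \<noteq> v \<Longrightarrow> F u \<inter> F v = {}"
    and m: "m \<le> length g"
  shows "\<exists>\<tau>. bij_betw \<tau> {..<block_start g m} (\<Union>u<m. F u) \<and>
      (\<forall>u<m. \<tau> ` {block_start g u..<block_start g u + g ! u} = F u)"
  using m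
proof (induction m)
  case 0 then show ?case by (simp add: block_start_def bij_betw_def)
next
  case (Suc m)
  then obtain \<tau> where tb: "bij_betw \<tau> {..<block_start g m} (\<Union>u<m. F u)"
    and timg: "\<forall>u<m. \<tau> ` {block_start g u..<block_start g u + g ! u} = F u" by auto
  have ml: "m < length g" using Suc by simp
  obtain h where hb: "bij_betw h {..<g ! m} (F m)"
    using finite_same_card_bij[of "{..<g ! m}" "F m"] F[OF ml] by auto
  define x where "x = block_start g m"
  define \<tau>' where "\<tau>' t = (if t < x then \<tau> t else h (t - x))" for t
  have b1: "bij_betw \<tau>' {..<x} (\<Union>u<m. F u)"
    using tb unfolding x_def by (rule bij_betw_cong[THEN iffD1, rotated]) (auto simp: \<tau>'_def x_def)
  have sh: "bij_betw (\<lambda>t. t - x) {x..<x + g ! m} {..<g ! m}"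
    by (rule bij_betwI[where g="\<lambda>a. x + a"]) auto
  have b2: "bij_betw \<tau>' {x..<x + g ! m} (F m)"
  proof -
    have "bij_betw (h \<circ> (\<lambda>t. t - x)) {x..<x + g ! m} (F m)" by (rule bij_betw_trans[OF sh hb])
    then show ?thesis by (rule bij_betw_cong[THEN iffD1, rotated]) (auto simp: \<tau>'_def)
  qed
  have dj: "(\<Union>u<m. F u) \<inter> F m = {}"
  proof -
    { fix u assume "u < m" then have "F u \<inter> F m = {}" using disj[of u m] ml by simp }
    then show ?thesis by blast
  qed
  have "bij_betw \<tau>' ({..<x} \<union> {x..<x + g ! m}) ((\<Union>u<m. F u) \<union> F m)"
    by (rule bij_betw_combine[OF b1 b2 dj])
  moreover have "{..<x} \<union> {x..<x + g ! m} = {..<block_start g (Suc m)}"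
    using block_start_Suc[OF ml] x_def by auto
  moreover have "(\<Union>u<m. F u) \<union> F m = (\<Union>u<Suc m. F u)" using lessThan_Suc by auto
  moreover have "\<forall>u<Suc m. \<tau>' ` {block_start g u..<block_start g u + g ! u} = F u"
  proof (intro allI impI)
    fix u assume u: "u < Suc m"
    show "\<tau>' ` {block_start g u..<block_start g u + g ! u} = F u"
    proof (cases "u = m")
      case True
      have "\<tau>' ` {x..<x + g ! m} = F m" using b2 by (simp add: bij_betw_def)
      then show ?thesis using True x_def by simp
    next
      case False
      then have um: "u < m" using u by simp
      have le: "block_start g u + g ! u \<le> x"
        using block_start_Suc[of u g] block_start_mono[of "Suc u" m g] um ml x_def by simp
      have "\<tau>' ` {block_start g u..<block_start g u + g ! u} = \<tau> ` {block_start g u..<block_start g u + g ! u}"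
        using le by (intro image_cong refl) (auto simp: \<tau>'_def)
      then show ?thesis using timg um by simp
    qed
  qed
  ultimately show ?case by (intro exI[of _ \<tau>']) simp
qed

definition block_sum :: "nat list \<Rightarrow> real list \<Rightarrow> nat \<Rightarrow> real" where
  "block_sum g p u = (\<Sum>a<g ! u. p ! (block_start g u + a))"

section \<open>Entropy bounds for the labelled partial trace\<close>

locale sorted_fibres_ptrace =
  fixes d n :: nat and \<beta> :: "nat \<Rightarrow> nat" and \<kappa> :: "nat \<Rightarrow> 'k" and g :: "nat list"
    and f :: "nat \<Rightarrow> nat" and \<rho> :: "complex mat" and p :: "real list"
  assumes \<beta>_less: "\<And>a. a < d \<Longrightarrow> \<beta> a < n"
    and inj_label: "inj_on (\<lambda>a. (\<beta> a, \<kappa> a)) {..<d}"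
    and length_g: "length g = n" and sorted_g: "sorted_wrt (\<ge>) g" and sum_g: "sum_list g = d"
    and bij_f: "bij_betw f {..<n} {..<n}"
    and card_fibre: "\<And>i. i < n \<Longrightarrow> card {a. a < d \<and> \<beta> a = i} = g ! (f i)"
    and density: "density_op d \<rho>"
    and spectrum: "mset (map complex_of_real p) = proots (char_poly \<rho>)"
    and sorted_p: "sorted_wrt (\<ge>) p"
begin

lemma length_p: "length p = d"
  using density spectrum hermitian_diagonalisation_eigenvalue_list(1) by (auto simp: density_op_def)

lemma rho_diagonalisation:
  obtains W where "unitary_op d W" "\<rho> = W * diag_matrix d (\<lambda>i. complex_of_real (p ! i)) * adj W"
proof -
  have "\<rho> \<in> carrier_mat d d" "adj \<rho> = \<rho>" using density by (auto simp: density_op_def)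
  then show ?thesis using hermitian_diagonalisation_eigenvalue_list(2)[OF _ _ spectrum] that by blast
qed

lemma p_nonneg: "i < d \<Longrightarrow> p ! i \<ge> 0"
  using rho_diagonalisation psd_conj_diag_nonneg[of d _ \<rho> "\<lambda>i. p ! i" i] density
  by (auto simp: density_op_def)

lemma p_antimono: "i \<le> j \<Longrightarrow> j < d \<Longrightarrow> p ! j \<le> p ! i"
  using sorted_wrt_nth_less[OF sorted_p, of i j] length_p by (cases "i = j") auto

lemma g_antimono: "i \<le> j \<Longrightarrow> j < n \<Longrightarrow> g ! j \<le> g ! i"
  using sorted_wrt_nth_less[OF sorted_g, of i j] length_g by (cases "i = j") auto

lemma block_start_n: "block_start g n = d"
  using block_start_length[of g] length_g sum_g by simp

lemma block_index_less: "u < n \<Longrightarrow> a < g ! u \<Longrightarrow> block_start g u + a < d"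
  using block_start_Suc[of u g] block_start_le[of g "Suc u"] length_g sum_g by simp

lemma block_sum_nonneg: "u < n \<Longrightarrow> block_sum g p u \<ge> 0"
  unfolding block_sum_def using block_index_less p_nonneg by (intro sum_nonneg) auto

lemma sum_p_block_start: "m \<le> n \<Longrightarrow> (\<Sum>t<block_start g m. p ! t) = (\<Sum>u<m. block_sum g p u)"
  unfolding block_sum_def using sum_by_blocks[of m g "\<lambda>t. p ! t"] length_g by simp

text \<open>The \<open>m\<close> leading columns of a unitary carry total weight \<open>m\<close> spread over the rows with
  at most \<open>1\<close> per row; weighting row \<open>i\<close> by its fibre size gives at most the \<open>m\<close> largest sizes.\<close>

lemma fibre_weight_le_block_start:
  assumes Vu: "unitary_op n V" and m: "m \<le> n"
  shows "(\<Sum>a<d. \<Sum>j<m. (cmod (V $$ (\<beta> a, j)))\<^sup>2) \<le> real (block_start g m)"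
proof -
  define s where "s i = (\<Sum>j<m. (cmod (V $$ (i, j)))\<^sup>2)" for i
  define finv where "finv = inv_into {..<n} f"
  have finv: "finv u < n" "f (finv u) = u" if "u < n" for u
    using bij_f that unfolding finv_def bij_betw_def by (metis f_inv_into_f inv_into_into lessThan_iff)+
  have finv_f: "finv (f i) = i" if "i < n" for i
    using bij_f that unfolding finv_def bij_betw_def by (simp add: inv_into_f_f)
  have s_le_1: "s i \<le> 1" if "i < n" for i
  proof -
    have "s i \<le> (\<Sum>j<n. (cmod (V $$ (i, j)))\<^sup>2)" unfolding s_def using m by (intro sum_mono2) auto
    then show ?thesis using unitary_row_norm[OF Vu that] by simp
  qed
  have "(\<Sum>i<n. s i) = (\<Sum>j<m. \<Sum>i<n. (cmod (V $$ (i, j)))\<^sup>2)" unfolding s_def by (rule sum.swap)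
  also have "\<dots> = real m" using m unitary_col_norm[OF Vu] by simp
  finally have sum_s: "(\<Sum>u<n. s (finv u)) = real m"
    using sum.reindex_bij_betw[OF bij_f, of "\<lambda>u. s (finv u)"] finv_f by simp
  have "(\<Sum>a<d. \<Sum>j<m. (cmod (V $$ (\<beta> a, j)))\<^sup>2) = (\<Sum>i<n. real (card {a. a < d \<and> \<beta> a = i}) * s i)"
    unfolding s_def by (rule sum_over_fibres[OF \<beta>_less])
  also have "\<dots> = (\<Sum>i<n. real (g ! f i) * s (finv (f i)))"
    using card_fibre finv_f by simp
  also have "\<dots> = (\<Sum>u<n. real (g ! u) * s (finv u))"
    by (rule sum.reindex_bij_betw[OF bij_f])
  also have "\<dots> \<le> (\<Sum>u<m. real (g ! u))"
    by (rule weighted_sum_le_prefix_sum) (use g_antimono s_le_1 finv sum_s m in \<open>auto simp: s_def intro: sum_nonneg\<close>)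
  also have "\<dots> = real (block_start g m)" using block_start_eq_sum[of m g] length_g m by simp
  finally show ?thesis .
qed

lemma label_ptrace_spectrum_majorised:
  assumes Xu: "unitary_op d X" and Vu: "unitary_op n V"
    and eq: "label_ptrace d n \<beta> \<kappa> (X * diag_matrix d (\<lambda>t. complex_of_real (p ! t)) * adj X)
           = V * diag_matrix n (\<lambda>j. complex_of_real (r j)) * adj V"
    and m: "m \<le> n"
  shows "(\<Sum>j<m. r j) \<le> (\<Sum>u<m. block_sum g p u)"
proof -
  define w where "w t = (\<Sum>j<m. label_ptrace_weight d \<beta> \<kappa> X V t j)" for t
  have "(\<Sum>j<m. r j) = (\<Sum>j<m. \<Sum>t<d. p ! t * label_ptrace_weight d \<beta> \<kappa> X V t j)"
    using m label_ptrace_eigenvalue_weighted[OF Xu Vu \<beta>_less eq] by simp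
  also have "\<dots> = (\<Sum>t<d. p ! t * w t)"
    unfolding w_def sum_distrib_left by (rule sum.swap)
  also have "\<dots> \<le> (\<Sum>t<block_start g m. p ! t)"
  proof (rule weighted_sum_le_prefix_sum)
    show "0 \<le> w t \<and> w t \<le> 1" if "t < d" for t
    proof
      show "0 \<le> w t" unfolding w_def using label_ptrace_weight_nonneg by (intro sum_nonneg) auto
      have "w t \<le> (\<Sum>j<n. label_ptrace_weight d \<beta> \<kappa> X V t j)"
        unfolding w_def using m label_ptrace_weight_nonneg by (intro sum_mono2) auto
      then show "w t \<le> 1" using label_ptrace_weight_row_sum[OF Xu Vu \<beta>_less inj_label that] by simp
    qed
    have "(\<Sum>t<d. w t) = (\<Sum>j<m. \<Sum>t<d. label_ptrace_weight d \<beta> \<kappa> X V t j)"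
      unfolding w_def by (rule sum.swap)
    also have "\<dots> = (\<Sum>a<d. \<Sum>j<m. (cmod (V $$ (\<beta> a, j)))\<^sup>2)"
      by (subst sum.swap, intro sum.cong refl label_ptrace_weight_col_sum[where \<beta>=\<beta> and n=n, OF Xu \<beta>_less])
        (use m in auto)
    also have "\<dots> \<le> real (block_start g m)" by (rule fibre_weight_le_block_start[OF Vu m])
    finally show "(\<Sum>t<d. w t) \<le> real (block_start g m)" .
  qed (use p_antimono p_nonneg block_start_le[of g m] sum_g in auto)
  also have "\<dots> = (\<Sum>u<m. block_sum g p u)" by (rule sum_p_block_start[OF m])
  finally show ?thesis .
qed

lemma label_ptrace_spectrum_total:
  assumes Xu: "unitary_op d X" and Vu: "unitary_op n V"
    and eq: "label_ptrace d n \<beta> \<kappa> (X * diag_matrix d (\<lambda>t. complex_of_real (p ! t)) * adj X)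
           = V * diag_matrix n (\<lambda>j. complex_of_real (r j)) * adj V"
  shows "(\<Sum>j<n. r j) = (\<Sum>u<n. block_sum g p u)"
proof -
  have "(\<Sum>j<n. r j) = (\<Sum>t<d. p ! t * (\<Sum>j<n. label_ptrace_weight d \<beta> \<kappa> X V t j))"
    using label_ptrace_eigenvalue_weighted[OF Xu Vu \<beta>_less eq]
    by (simp add: sum.swap[of _ "{..<n}"] sum_distrib_left)
  also have "\<dots> = (\<Sum>t<block_start g n. p ! t)"
    using label_ptrace_weight_row_sum[OF Xu Vu \<beta>_less inj_label] block_start_n by simp
  finally show ?thesis using sum_p_block_start[of n] by simp
qed

theorem vN_entropy_label_ptrace_ge:
  assumes b: "b > 1" and Uu: "unitary_op d U"
  shows "- (\<Sum>u<n. block_sum g p u * log b (block_sum g p u))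
           \<le> vN_entropy b (label_ptrace d n \<beta> \<kappa> (U * \<rho> * adj U))"
proof -
  obtain W where Wu: "unitary_op d W" and \<rho>eq: "\<rho> = W * diag_matrix d (\<lambda>i. complex_of_real (p ! i)) * adj W"
    using rho_diagonalisation by blast
  have W: "W \<in> carrier_mat d d" and U: "U \<in> carrier_mat d d" using Wu Uu unitary_carrier by blast+
  define X where "X = U * W"
  define D where "D = diag_matrix d (\<lambda>i. complex_of_real (p ! i))"
  have Xu: "unitary_op d X" unfolding X_def by (rule unitary_mult[OF Uu Wu])
  have X: "X \<in> carrier_mat d d" using Xu by (rule unitary_carrier)
  have D: "D \<in> carrier_mat d d" by (simp add: D_def)
  have \<sigma>eq: "U * \<rho> * adj U = X * D * adj X"
    unfolding X_def \<rho>eq D_def[symmetric] using U W D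
    by (simp add: adj_mult[OF U W] assoc_mult_mat[of _ d d _ d _ d] mult_carrier_mat[of _ d d _ d])
  define \<tau> where "\<tau> = label_ptrace d n \<beta> \<kappa> (X * D * adj X)"
  have "adj \<tau> = \<tau>" unfolding \<tau>_def D_def
    using X by (intro label_ptrace_hermitian conj_diag_hermitian) auto
  then obtain V rs where Vu: "unitary_op n V" and lrs: "length rs = n" and rs: "sorted_wrt (\<ge>) rs"
    and \<tau>eq: "\<tau> = V * diag_matrix n (\<lambda>i. complex_of_real (rs ! i)) * adj V"
    using hermitian_diagonalisation_sorted[of \<tau> n] by (auto simp: \<tau>_def)
  have eq: "label_ptrace d n \<beta> \<kappa> (X * diag_matrix d (\<lambda>t. complex_of_real (p ! t)) * adj X)
      = V * diag_matrix n (\<lambda>j. complex_of_real (rs ! j)) * adj V"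
    using \<tau>eq unfolding \<tau>_def D_def .
  have "(\<Sum>j<n. rs ! j * log b (rs ! j)) \<le> (\<Sum>u<n. block_sum g p u * log b (block_sum g p u))"
  proof (rule sum_xlogx_le_of_majorised[OF b])
    show "rs ! j \<ge> 0" if "j < n" for j
    proof -
      have "0 \<le> (\<Sum>t<d. p ! t * label_ptrace_weight d \<beta> \<kappa> X V t j)"
        by (intro sum_nonneg mult_nonneg_nonneg p_nonneg label_ptrace_weight_nonneg) simp
      then show ?thesis using label_ptrace_eigenvalue_weighted[OF Xu Vu \<beta>_less eq that] by simp
    qed
    show "rs ! j \<le> rs ! i" if "i \<le> j" "j < n" for i j
      using sorted_wrt_nth_less[OF rs, of i j] lrs that by (cases "i = j") auto
  qed (use block_sum_nonneg label_ptrace_spectrum_majorised[OF Xu Vu eq]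
         label_ptrace_spectrum_total[OF Xu Vu eq] in auto)
  then show ?thesis
    unfolding \<sigma>eq \<tau>_def[symmetric] \<tau>eq vN_entropy_conj_diag[OF Vu] by simp
qed

lemma fibres_bij_blocks:
  obtains \<tau> where "bij_betw \<tau> {..<d} {..<d}"
    "\<And>i. i < n \<Longrightarrow> {a. a < d \<and> \<beta> a = i} = \<tau> ` {block_start g (f i)..<block_start g (f i) + g ! f i}"
proof -
  define F where "F u = {a. a < d \<and> f (\<beta> a) = u}" for u
  define finv where "finv = inv_into {..<n} f"
  have finv: "finv u < n" "f (finv u) = u" if "u < n" for u
    using bij_f that unfolding finv_def bij_betw_def by (metis f_inv_into_f inv_into_into lessThan_iff)+
  have F_f: "F (f i) = {a. a < d \<and> \<beta> a = i}" if "i < n" for i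
    using bij_f \<beta>_less that unfolding F_def bij_betw_def inj_on_def by auto
  have card_F: "finite (F u) \<and> card (F u) = g ! u" if "u < length g" for u
  proof -
    have "F u = {a. a < d \<and> \<beta> a = finv u}" using F_f finv that length_g by metis
    then show ?thesis using card_fibre finv that length_g by (simp add: F_def)
  qed
  have "(\<Union>u<n. F u) = {..<d}"
    using bij_f \<beta>_less unfolding F_def bij_betw_def by auto
  moreover obtain \<tau> where "bij_betw \<tau> {..<block_start g (length g)} (\<Union>u<length g. F u)"
    and img: "\<forall>u<length g. \<tau> ` {block_start g u..<block_start g u + g ! u} = F u"
    using blocks_bij_betw[of g F "length g"] card_F by (auto simp: F_def)
  ultimately have "bij_betw \<tau> {..<d} {..<d}" using length_g block_start_n by simp
  moreover have "{a. a < d \<and> \<beta> a = i} = \<tau> ` {block_start g (f i)..<block_start g (f i) + g ! f i}"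
    if "i < n" for i
  proof -
    have "f i < length g" using bij_f that length_g unfolding bij_betw_def by auto
    then show ?thesis using img F_f[OF that] by simp
  qed
  ultimately show ?thesis using that by blast
qed

theorem vN_entropy_label_ptrace_attained:
  obtains U where "unitary_op d U"
    "vN_entropy b (label_ptrace d n \<beta> \<kappa> (U * \<rho> * adj U))
       = - (\<Sum>u<n. block_sum g p u * log b (block_sum g p u))"
proof -
  obtain W where Wu: "unitary_op d W" and \<rho>eq: "\<rho> = W * diag_matrix d (\<lambda>i. complex_of_real (p ! i)) * adj W"
    using rho_diagonalisation by blast
  obtain \<tau> where \<tau>: "bij_betw \<tau> {..<d} {..<d}"
    and fibre: "\<And>i. i < n \<Longrightarrow> {a. a < d \<and> \<beta> a = i} = \<tau> ` {block_start g (f i)..<block_start g (f i) + g ! f i}"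
    using fibres_bij_blocks by blast
  define e where "e a = p ! inv_into {..<d} \<tau> a" for a
  have e\<tau>: "e (\<tau> t) = p ! t" if "t < d" for t
    using \<tau> that unfolding e_def bij_betw_def by (simp add: inv_into_f_f)
  define P where "P = perm_matrix d \<tau>"
  define U where "U = P * adj W"
  define D where "D = diag_matrix d (\<lambda>i. complex_of_real (p ! i))"
  have Pu: "unitary_op d P" unfolding P_def by (rule unitary_perm_matrix[OF \<tau>])
  have W: "W \<in> carrier_mat d d" and P: "P \<in> carrier_mat d d" using Wu Pu unitary_carrier by blast+
  have D: "D \<in> carrier_mat d d" by (simp add: D_def)
  have "U * \<rho> * adj U = P * (adj W * W) * D * (adj W * W) * adj P"
    unfolding U_def \<rho>eq D_def[symmetric] using P W D
    by (simp add: adj_mult[OF P adj_carrier[OF W]] assoc_mult_mat[of _ d d _ d _ d] mult_carrier_mat[of _ d d _ d])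
  also have "\<dots> = P * D * adj P" using unitary_left[OF Wu] P D by simp
  also have "D = diag_matrix d (\<lambda>t. (\<lambda>a. complex_of_real (e a)) (\<tau> t))"
    unfolding D_def by (rule eq_matI) (auto simp: e\<tau>)
  also have "P * \<dots> * adj P = diag_matrix d (\<lambda>a. complex_of_real (e a))"
    unfolding P_def by (rule perm_matrix_conj_diag[OF \<tau>])
  finally have UrU: "U * \<rho> * adj U = diag_matrix d (\<lambda>a. complex_of_real (e a))" .
  have fibre_sum: "(\<Sum>a\<in>{a. a < d \<and> \<beta> a = i}. e a) = block_sum g p (f i)" if i: "i < n" for i
  proof -
    define B where "B = {block_start g (f i)..<block_start g (f i) + g ! f i}"
    have fi: "f i < n" using bij_f i unfolding bij_betw_def by auto
    then have "block_start g (f i) + g ! f i \<le> d"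
      using block_start_Suc[of "f i" g] block_start_le[of g "Suc (f i)"] length_g sum_g by simp
    then have Bd: "B \<subseteq> {..<d}" unfolding B_def by auto
    then have "inj_on \<tau> B" using \<tau> unfolding bij_betw_def by (auto intro: inj_on_subset)
    then have "(\<Sum>a\<in>{a. a < d \<and> \<beta> a = i}. e a) = (\<Sum>t\<in>B. e (\<tau> t))"
      unfolding fibre[OF i] B_def[symmetric] by (simp add: sum.reindex)
    also have "\<dots> = (\<Sum>t\<in>B. p ! t)" using Bd e\<tau> by (intro sum.cong refl) auto
    also have "\<dots> = block_sum g p (f i)" unfolding B_def block_sum_def by (rule sum_atLeastLessThan_add)
    finally show ?thesis .
  qed
  have "label_ptrace d n \<beta> \<kappa> (U * \<rho> * adj U) = 1\<^sub>m n * diag_matrix n (\<lambda>i. complex_of_real (block_sum g p (f i))) * adj (1\<^sub>m n)"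
    unfolding UrU label_ptrace_diag using fibre_sum by (intro eq_matI) (simp_all flip: of_real_sum)
  then have "vN_entropy b (label_ptrace d n \<beta> \<kappa> (U * \<rho> * adj U))
      = - (\<Sum>i<n. block_sum g p (f i) * log b (block_sum g p (f i)))"
    using vN_entropy_conj_diag[OF unitary_one] by simp
  also have "\<dots> = - (\<Sum>u<n. block_sum g p u * log b (block_sum g p u))"
    using sum.reindex_bij_betw[OF bij_f, of "\<lambda>u. block_sum g p u * log b (block_sum g p u)"] by simp
  finally show ?thesis using that unitary_mult[OF Pu unitary_adj[OF Wu]] unfolding U_def by blast
qed

end

section \<open>Occupation-number bases\<close>

lemma set_comps: "xs \<in> set (comps n l) \<longleftrightarrow> length xs = l \<and> sum_list xs = n"
proof (induction l arbitrary: n xs)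
  case 0 then show ?case by auto
next
  case (Suc l)
  show ?case
  proof
    assume "xs \<in> set (comps n (Suc l))"
    then obtain k ys where "k \<le> n" "ys \<in> set (comps (n - k) l)" "xs = k # ys" by auto
    then show "length xs = Suc l \<and> sum_list xs = n" using Suc.IH by auto
  next
    assume a: "length xs = Suc l \<and> sum_list xs = n"
    then obtain k ys where xs: "xs = k # ys" by (cases xs) auto
    then have "k \<le> n" "ys \<in> set (comps (n - k) l)" using a Suc.IH by auto
    then show "xs \<in> set (comps n (Suc l))" using xs by force
  qed
qed

lemma distinct_concat_map_upt:
  assumes "\<And>k. k < m \<Longrightarrow> distinct (F k)"
    and "\<And>k j x. k < j \<Longrightarrow> j < m \<Longrightarrow> x \<in> set (F k) \<Longrightarrow> x \<notin> set (F j)"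
  shows "distinct (concat (map F [0..<m]))"
  using assms
proof (induction m)
  case 0 then show ?case by simp
next
  case (Suc m)
  have "distinct (concat (map F [0..<m]))" using Suc by auto
  moreover have "distinct (F m)" using Suc by auto
  moreover have "set (concat (map F [0..<m])) \<inter> set (F m) = {}" using Suc.prems(2)[of _ m] by auto
  ultimately show ?case by simp
qed

lemma distinct_comps: "distinct (comps n l)"
proof (induction l arbitrary: n)
  case 0 then show ?case by simp
next
  case (Suc l)
  show ?case unfolding comps.simps
    by (rule distinct_concat_map_upt) (auto simp: distinct_map Suc.IH)
qed

lemma length_comps: "0 < l \<Longrightarrow> length (comps n l) = (n + l - 1) choose (l - 1)"
proof (induction l arbitrary: n)
  case 0 then show ?case by simp
next
  case (Suc l)
  show ?case
  proof (cases "l = 0")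
    case True
    have "set (comps n (Suc 0)) = {[n]}"
    proof
      show "set (comps n (Suc 0)) \<subseteq> {[n]}"
      proof
        fix xs assume "xs \<in> set (comps n (Suc 0))"
        then have "length xs = 1" "sum_list xs = n" using set_comps by auto
        then show "xs \<in> {[n]}" by (cases xs) auto
      qed
      show "{[n]} \<subseteq> set (comps n (Suc 0))" using set_comps[of "[n]" n "Suc 0"] by simp
    qed
    then have "length (comps n (Suc 0)) = 1" using distinct_card[OF distinct_comps[of n "Suc 0"]] by simp
    then show ?thesis using True by simp
  next
    case False
    have "length (comps n (Suc l)) = (\<Sum>k\<leftarrow>[0..<Suc n]. length (comps (n - k) l))"
      by (simp add: length_concat comp_def)
    also have "\<dots> = (\<Sum>k\<in>{0..n}. length (comps (n - k) l))"
      by (simp only: sum_set_upt_conv_sum_list_nat[symmetric] set_upt atLeastLessThanSuc_atLeastAtMost)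
    also have "\<dots> = (\<Sum>k\<in>{0..n}. (n - k + l - 1) choose (l - 1))"
      by (rule sum.cong[OF refl], rule Suc.IH) (use False in simp)
    also have "\<dots> = (\<Sum>k\<in>{0..n}. (l - 1 + k) choose (l - 1))"
      by (subst sum.atLeastAtMost_rev) (intro sum.cong refl, use False in \<open>auto simp: add.commute\<close>)
    also have "\<dots> = (l - 1 + n + 1) choose (l - 1 + 1)"
      using choose_rising_sum(1)[of "l - 1" n] by (simp add: atLeast0AtMost)
    finally show ?thesis using False by (simp add: add.commute)
  qed
qed

lemma set_Bstates: "ys \<in> set (Bstates N l) \<longleftrightarrow> length ys = l \<and> sum_list ys \<le> N"
  unfolding Bstates_def by (auto simp: set_comps)

lemma distinct_Bstates: "distinct (Bstates N l)"
  unfolding Bstates_def by (rule distinct_concat_map_upt) (auto simp: distinct_comps set_comps)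

definition sector_blocks :: "(nat \<Rightarrow> nat) \<Rightarrow> (nat \<Rightarrow> nat) \<Rightarrow> nat \<Rightarrow> nat list" where
  "sector_blocks dA dB K = concat (map (\<lambda>k. replicate (dB k) (dA k)) [0..<K])"

lemma sector_blocks_Suc: "sector_blocks dA dB (Suc K) = sector_blocks dA dB K @ replicate (dB K) (dA K)"
  by (simp add: sector_blocks_def)

lemma sum_list_sector_blocks: "sum_list (sector_blocks dA dB K) = (\<Sum>j<K. dA j * dB j)"
  by (induction K) (simp_all add: sector_blocks_Suc sector_blocks_def sum_list_replicate)

lemma sector_blocks_prefix: "K \<le> K' \<Longrightarrow> \<exists>rest. sector_blocks dA dB K' = sector_blocks dA dB K @ rest"
proof (induction K' rule: dec_induct)
  case base then show ?case by simp
next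
  case (step K')
  then obtain rest where "sector_blocks dA dB K' = sector_blocks dA dB K @ rest" by blast
  then show ?case by (simp add: sector_blocks_Suc)
qed

lemma block_sum_sector_blocks:
  assumes "K \<le> K'"
  shows "map (block_sum (sector_blocks dA dB K') p) [0..<length (sector_blocks dA dB K)]
    = concat (map (\<lambda>k. map (\<lambda>b. \<Sum>a<dA k. p ! ((\<Sum>j<k. dA j * dB j) + b * dA k + a)) [0..<dB k]) [0..<K])"
  using assms
proof (induction K)
  case 0 then show ?case by (simp add: sector_blocks_def)
next
  case (Suc K)
  define x where "x = length (sector_blocks dA dB K)"
  obtain rest where GK': "sector_blocks dA dB K' = sector_blocks dA dB K @ replicate (dB K) (dA K) @ rest"
    using sector_blocks_prefix[OF Suc.prems] by (auto simp: sector_blocks_Suc)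
  have len: "length (sector_blocks dA dB (Suc K)) = x + dB K" by (simp add: x_def sector_blocks_Suc)
  have split: "[0..<x + dB K] = [0..<x] @ map (\<lambda>b. x + b) [0..<dB K]"
  proof -
    have "[0..<x + dB K] = [0..<x] @ [x..<x + dB K]" by (rule upt_add_eq_append) simp
    also have "[x..<x + dB K] = map (\<lambda>b. x + b) [0..<dB K]" by (rule nth_equalityI) auto
    finally show ?thesis .
  qed
  have blk: "block_sum (sector_blocks dA dB K') p (x + b) = (\<Sum>a<dA K. p ! ((\<Sum>j<K. dA j * dB j) + b * dA K + a))"
    if b: "b < dB K" for b
  proof -
    have nth: "sector_blocks dA dB K' ! (x + b) = dA K" unfolding GK' x_def using b by (simp add: nth_append)
    have "take (x + b) (sector_blocks dA dB K') = sector_blocks dA dB K @ take b (replicate (dB K) (dA K))"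
      unfolding GK' x_def using b by simp
    then have "block_start (sector_blocks dA dB K') (x + b) = (\<Sum>j<K. dA j * dB j) + b * dA K"
      unfolding block_start_def using b by (simp add: sum_list_sector_blocks min_def sum_list_replicate)
    then show ?thesis unfolding block_sum_def nth by simp
  qed
  have "map (block_sum (sector_blocks dA dB K') p) [0..<length (sector_blocks dA dB (Suc K))]
      = map (block_sum (sector_blocks dA dB K') p) [0..<x] @ map (\<lambda>b. block_sum (sector_blocks dA dB K') p (x + b)) [0..<dB K]"
    unfolding len split by simp
  also have "map (block_sum (sector_blocks dA dB K') p) [0..<x] = concat (map (\<lambda>k. map (\<lambda>b. \<Sum>a<dA k. p ! ((\<Sum>j<k. dA j * dB j) + b * dA k + a)) [0..<dB k]) [0..<K])"
    unfolding x_def by (rule Suc.IH) (use Suc.prems in simp)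
  also have "map (\<lambda>b. block_sum (sector_blocks dA dB K') p (x + b)) [0..<dB K] = map (\<lambda>b. \<Sum>a<dA K. p ! ((\<Sum>j<K. dA j * dB j) + b * dA K + a)) [0..<dB K]"
    using blk by simp
  finally show ?case by simp
qed

lemma sorted_sector_blocks:
  assumes "\<And>i j. i \<le> j \<Longrightarrow> j < K \<Longrightarrow> dA j \<le> dA i"
  shows "sorted_wrt (\<ge>) (sector_blocks dA dB K)"
  using assms
proof (induction K)
  case 0 then show ?case by (simp add: sector_blocks_def)
next
  case (Suc K)
  have s1: "sorted_wrt (\<ge>) (sector_blocks dA dB K)" using Suc by auto
  have s2: "sorted_wrt (\<ge>) (replicate (dB K) (dA K))" by (simp add: sorted_wrt_iff_nth_less)
  have setG: "set (sector_blocks dA dB K) \<subseteq> dA ` {..<K}" by (auto simp: sector_blocks_def)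
  have s3: "\<forall>x\<in>set (sector_blocks dA dB K). \<forall>y\<in>set (replicate (dB K) (dA K)). y \<le> x"
  proof (intro ballI)
    fix x y assume x: "x \<in> set (sector_blocks dA dB K)" and y: "y \<in> set (replicate (dB K) (dA K))"
    from x setG obtain k where k: "k < K" "x = dA k" by auto
    have "y = dA K" using y by simp
    then show "y \<le> x" using Suc.prems[of k K] k by simp
  qed
  show ?case unfolding sector_blocks_Suc sorted_wrt_append using s1 s2 s3 by simp
qed

lemma mset_sector_blocks: "mset (sector_blocks dA dB K) = (\<Sum>k<K. replicate_mset (dB k) (dA k))"
  by (induction K) (simp_all add: sector_blocks_Suc sector_blocks_def)

lemma sum_block_sum_sector_blocks:
  "(\<Sum>u<length (sector_blocks dA dB K). h (block_sum (sector_blocks dA dB K) p u))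
     = (\<Sum>k<K. \<Sum>b<dB k. h (\<Sum>a<dA k. p ! ((\<Sum>j<k. dA j * dB j) + b * dA k + a)))"
proof -
  have sum_list_map_upt: "sum_list (map f [0..<m]) = (\<Sum>i<m. f i)" for f :: "nat \<Rightarrow> 'a" and m
    by (simp flip: sum_set_upt_conv_sum_list_nat add: atLeast0LessThan)
  have "(\<Sum>u<length (sector_blocks dA dB K). h (block_sum (sector_blocks dA dB K) p u))
      = sum_list (map h (map (block_sum (sector_blocks dA dB K) p) [0..<length (sector_blocks dA dB K)]))"
    by (simp add: sum_list_map_upt)
  also have "\<dots> = (\<Sum>k<K. \<Sum>b<dB k. h (\<Sum>a<dA k. p ! ((\<Sum>j<k. dA j * dB j) + b * dA k + a)))"
    unfolding block_sum_sector_blocks[OF order.refl]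
    by (induction K) (simp_all add: sum_list_map_upt)
  finally show ?thesis .
qed

lemma mset_map_concat_map_upt:
  "mset (map F (concat (map G [0..<K]))) = (\<Sum>m<K. mset (map F (G m)))"
  by (induction K) simp_all

locale fock_bipartition =
  fixes N L lA :: nat
  assumes lA_pos: "0 < lA" and lA_less: "lA < L"
begin

abbreviation "basis \<equiv> comps N L"
abbreviation "B_basis \<equiv> Bstates N (L - lA)"

definition B_index :: "nat \<Rightarrow> nat" where
  "B_index a = inv_into {..<length B_basis} (\<lambda>i. B_basis ! i) (drop lA (basis ! a))"

definition A_part :: "nat \<Rightarrow> nat list" where
  "A_part a = take lA (basis ! a)"

lemma basis_nth: "a < length basis \<Longrightarrow> length (basis ! a) = L \<and> sum_list (basis ! a) = N"
  using nth_mem set_comps by blast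

lemma drop_basis_in_B_basis: "a < length basis \<Longrightarrow> drop lA (basis ! a) \<in> set B_basis"
  using basis_nth[of a] sum_list_append[of "take lA (basis ! a)" "drop lA (basis ! a)"]
  by (simp add: set_Bstates)

lemma B_index_less: "a < length basis \<Longrightarrow> B_index a < length B_basis"
  unfolding B_index_def using drop_basis_in_B_basis
  by (metis in_set_conv_nth inv_into_into lessThan_iff image_eqI lessThan_iff)

lemma B_basis_B_index: "a < length basis \<Longrightarrow> B_basis ! B_index a = drop lA (basis ! a)"
  unfolding B_index_def using drop_basis_in_B_basis
  by (metis (no_types, lifting) f_inv_into_f image_iff in_set_conv_nth lessThan_iff)

lemma B_index_eq_iff:
  "a < length basis \<Longrightarrow> i < length B_basis \<Longrightarrow> B_index a = i \<longleftrightarrow> drop lA (basis ! a) = B_basis ! i"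
  using B_basis_B_index B_index_less distinct_Bstates nth_eq_iff_index_eq by metis

lemma basis_eq_iff_parts:
  "a < length basis \<Longrightarrow> b < length basis \<Longrightarrow> a = b \<longleftrightarrow> take lA (basis ! a) = take lA (basis ! b)
     \<and> drop lA (basis ! a) = drop lA (basis ! b)"
  using distinct_comps nth_eq_iff_index_eq by (metis append_take_drop_id)

lemma inj_on_B_index_A_part: "inj_on (\<lambda>a. (B_index a, A_part a)) {..<length basis}"
  by (rule inj_onI) (metis A_part_def B_basis_B_index basis_eq_iff_parts lessThan_iff prod.inject)

lemma ptrace_A_eq_label_ptrace:
  "ptrace_A N L lA \<sigma> = label_ptrace (length basis) (length B_basis) B_index A_part \<sigma>"
  unfolding ptrace_A_def label_ptrace_def Let_def A_part_def
  by (intro cong_mat refl) (auto simp: B_index_eq_iff intro!: sum.cong)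

text \<open>The fibre over a \<open>B\<close>-state with \<open>m\<close> particles is in bijection with the \<open>A\<close>-states
  holding the remaining \<open>N - m\<close> particles.\<close>

lemma card_B_index_fibre:
  assumes i: "i < length B_basis"
  shows "card {a. a < length basis \<and> B_index a = i} = (N - sum_list (B_basis ! i) + lA - 1) choose (lA - 1)"
proof -
  define y where "y = B_basis ! i"
  have y: "length y = L - lA" "sum_list y \<le> N" using nth_mem[OF i] set_Bstates unfolding y_def by auto
  have fibre: "{a. a < length basis \<and> B_index a = i} = {a. a < length basis \<and> drop lA (basis ! a) = y}"
    using B_index_eq_iff i unfolding y_def by auto
  have "bij_betw (\<lambda>a. take lA (basis ! a)) {a. a < length basis \<and> drop lA (basis ! a) = y}
      (set (comps (N - sum_list y) lA))"
  proof (rule bij_betw_imageI)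
    show "inj_on (\<lambda>a. take lA (basis ! a)) {a. a < length basis \<and> drop lA (basis ! a) = y}"
      by (rule inj_onI) (auto simp: basis_eq_iff_parts)
    show "(\<lambda>a. take lA (basis ! a)) ` {a. a < length basis \<and> drop lA (basis ! a) = y}
        = set (comps (N - sum_list y) lA)"
    proof (intro equalityI subsetI)
      fix x assume "x \<in> (\<lambda>a. take lA (basis ! a)) ` {a. a < length basis \<and> drop lA (basis ! a) = y}"
      then obtain a where a: "a < length basis" "drop lA (basis ! a) = y" and x: "x = take lA (basis ! a)"
        by auto
      have "sum_list x + sum_list y = N"
        using basis_nth[OF a(1)] a(2) x by (metis append_take_drop_id sum_list_append)
      then show "x \<in> set (comps (N - sum_list y) lA)"
        using basis_nth[OF a(1)] lA_less x by (simp add: set_comps)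
    next
      fix x assume "x \<in> set (comps (N - sum_list y) lA)"
      then have x: "length x = lA" "sum_list x = N - sum_list y" by (auto simp: set_comps)
      have "x @ y \<in> set basis" using x y lA_less by (simp add: set_comps)
      then obtain a where "a < length basis" "basis ! a = x @ y" by (auto simp: in_set_conv_nth)
      then show "x \<in> (\<lambda>a. take lA (basis ! a)) ` {a. a < length basis \<and> drop lA (basis ! a) = y}"
        using x by (intro image_eqI[of _ _ a]) auto
    qed
  qed
  then have "card {a. a < length basis \<and> B_index a = i} = card (set (comps (N - sum_list y) lA))"
    unfolding fibre by (rule bij_betw_same_card)
  also have "\<dots> = (N - sum_list y + lA - 1) choose (lA - 1)"
    using distinct_card[OF distinct_comps] length_comps[OF lA_pos] by simp
  finally show ?thesis unfolding y_def .
qed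

lemma mset_card_B_index_fibres:
  "mset (map (\<lambda>i. card {a. a < length basis \<and> B_index a = i}) [0..<length B_basis])
     = (\<Sum>m<Suc N. replicate_mset (length (comps m (L - lA))) ((N - m + lA - 1) choose (lA - 1)))"
proof -
  define h where "h m = (N - m + lA - 1) choose (lA - 1)" for m
  have "map (\<lambda>i. card {a. a < length basis \<and> B_index a = i}) [0..<length B_basis]
      = map (\<lambda>y. h (sum_list y)) (concat (map (\<lambda>m. comps m (L - lA)) [0..<Suc N]))"
    unfolding Bstates_def[symmetric] by (rule nth_equalityI) (auto simp: card_B_index_fibre h_def)
  also have "mset \<dots> = (\<Sum>m<Suc N. mset (map (\<lambda>y. h (sum_list y)) (comps m (L - lA))))"
    by (rule mset_map_concat_map_upt)
  also have "\<dots> = (\<Sum>m<Suc N. replicate_mset (length (comps m (L - lA))) (h m))"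
  proof (intro sum.cong refl)
    fix m
    have "map (\<lambda>y. h (sum_list y)) (comps m (L - lA)) = map (\<lambda>y. h m) (comps m (L - lA))"
      by (rule map_cong) (auto simp: set_comps)
    then show "mset (map (\<lambda>y. h (sum_list y)) (comps m (L - lA))) = replicate_mset (length (comps m (L - lA))) (h m)"
      by (simp add: map_replicate_const)
  qed
  finally show ?thesis unfolding h_def .
qed

text \<open>Listing the sectors \<open>n\<^sub>A = \<pi> k\<close> in the given order, sector \<open>k\<close> contributes \<open>d\<^sub>B k\<close>
  fibres of size \<open>d\<^sub>A k\<close>; these sizes are the fibre sizes of \<open>B_index\<close> up to a permutation.\<close>

lemma sorted_fibres_ptrace_sector_blocks:
  fixes \<pi> :: "nat \<Rightarrow> nat"
  defines "dA \<equiv> \<lambda>k. (\<pi> k + lA - 1) choose (lA - 1)"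
    and "dB \<equiv> \<lambda>k. (N - \<pi> k + (L - lA) - 1) choose (L - lA - 1)"
  assumes \<pi>: "bij_betw \<pi> {..N} {..N}" and dA_antimono: "\<forall>k<N. dA (Suc k) \<le> dA k"
    and density: "density_op (length basis) \<rho>"
    and spectrum: "mset (map complex_of_real p) = proots (char_poly \<rho>)"
    and sorted_p: "sorted_wrt (\<ge>) p"
  obtains f where "sorted_fibres_ptrace (length basis) (length B_basis) B_index A_part
      (sector_blocks dA dB (Suc N)) f \<rho> p"
proof -
  define g where "g = sector_blocks dA dB (Suc N)"
  define c where "c i = card {a. a < length basis \<and> B_index a = i}" for i
  have \<pi>': "bij_betw (\<lambda>k. N - \<pi> k) {..<Suc N} {..<Suc N}"
  proof -
    have "bij_betw (\<lambda>m. N - m) {..N} {..N}" by (rule bij_betwI[where g="\<lambda>m. N - m"]) auto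
    then show ?thesis using bij_betw_trans[OF \<pi>] by (simp add: lessThan_Suc_atMost comp_def)
  qed
  have "\<pi> k \<le> N" if "k < Suc N" for k using \<pi> that unfolding bij_betw_def by auto
  then have "mset g = (\<Sum>k<Suc N. (\<lambda>m. replicate_mset (length (comps m (L - lA)))
      ((N - m + lA - 1) choose (lA - 1))) (N - \<pi> k))"
    using lA_less unfolding g_def mset_sector_blocks
    by (intro sum.cong refl) (simp add: length_comps dA_def dB_def)
  also have "\<dots> = (\<Sum>m<Suc N. replicate_mset (length (comps m (L - lA))) ((N - m + lA - 1) choose (lA - 1)))"
    by (rule sum.reindex_bij_betw[OF \<pi>'])
  also have "\<dots> = mset (map c [0..<length B_basis])"
    unfolding c_def by (rule mset_card_B_index_fibres[symmetric])
  finally have mset_g: "mset g = mset (map c [0..<length B_basis])" .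
  then have length_g: "length g = length B_basis" using mset_eq_length by fastforce
  obtain f where fp: "f permutes {..<length g}" and fl: "permute_list f g = map c [0..<length B_basis]"
    using mset_eq_permutation[OF mset_g[symmetric]] by blast
  have bij_f: "bij_betw f {..<length B_basis} {..<length B_basis}"
    using permutes_imp_bij[OF fp] length_g by simp
  have card_fibre: "c i = g ! f i" if "i < length B_basis" for i
    using permute_list_nth[OF fp] fl that length_g by (metis length_map length_upt diff_zero nth_map_upt add_0)
  have "dA j \<le> dA i" if "i \<le> j" "j < Suc N" for i j
    using lift_Suc_antimono_le_ivl[of "{..<N}" dA i j] dA_antimono that by (auto simp: subset_iff)
  then have "sorted_wrt (\<ge>) g"
    unfolding g_def by (rule sorted_sector_blocks)
  moreover have "sum_list g = length basis"
  proof -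
    have "real (sum_list g) = (\<Sum>i<length B_basis. real (g ! f i))"
      using length_g sum.reindex_bij_betw[OF bij_f, of "\<lambda>u. real (g ! u)"]
      by (simp add: sum_list_sum_nth atLeast0LessThan)
    also have "\<dots> = (\<Sum>a<length basis. (\<lambda>_. 1::real) (B_index a))"
      using card_fibre sum_over_fibres[OF B_index_less, where h = "\<lambda>_. 1"] by (simp add: c_def)
    finally show ?thesis by simp
  qed
  ultimately have "sorted_fibres_ptrace (length basis) (length B_basis) B_index A_part g f \<rho> p"
    using B_index_less inj_on_B_index_A_part length_g bij_f card_fibre density spectrum sorted_p
    by unfold_locales (auto simp: c_def)
  then show ?thesis using that unfolding g_def by blast
qed

end

theorem theorem1:
  fixes N L lA :: nat and \<beta> :: real and \<rho> :: "complex mat" and p :: "real list"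
    and \<pi> :: "nat \<Rightarrow> nat"
  assumes "L \<ge> 2" and "1 \<le> lA" and "lA \<le> L - 1" and "\<beta> > 1"
    and "density_op (length (comps N L)) \<rho>"
    and "mset (map complex_of_real p) = proots (char_poly \<rho>)"
    and "sorted_wrt (\<ge>) p"
    and "bij_betw \<pi> {..N} {..N}"
    and "\<forall>k<N. (\<pi> (Suc k) + lA - 1) choose (lA - 1) \<le> (\<pi> k + lA - 1) choose (lA - 1)"
  shows
   "(let lB = L - lA;
         dA = (\<lambda>k. (\<pi> k + lA - 1) choose (lA - 1));
         dB = (\<lambda>k. (N - \<pi> k + lB - 1) choose (lB - 1));
         off = (\<lambda>k. \<Sum>j<k. dA j * dB j);
         q = (\<lambda>k b. \<Sum>a<dA k. p ! (off k + b * dA k + a));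
         val = - (\<Sum>k\<le>N. \<Sum>b<dB k. q k b * log \<beta> (q k b));
         S = (\<lambda>U. vN_entropy \<beta> (ptrace_A N L lA (U * \<rho> * adj U)))
     in (\<exists>U. unitary_op (length (comps N L)) U \<and> S U = val)
        \<and> (\<forall>U. unitary_op (length (comps N L)) U \<longrightarrow> val \<le> S U))"
proof -
  interpret fock_bipartition N L lA using assms(1-3) by unfold_locales auto
  define dA where "dA k = (\<pi> k + lA - 1) choose (lA - 1)" for k
  define dB where "dB k = (N - \<pi> k + (L - lA) - 1) choose (L - lA - 1)" for k
  define g where "g = sector_blocks dA dB (Suc N)"
  obtain f where "sorted_fibres_ptrace (length basis) (length B_basis) B_index A_part g f \<rho> p"
    using sorted_fibres_ptrace_sector_blocks[OF assms(8) _ assms(5-7)] assms(9)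
    unfolding g_def dA_def dB_def by blast
  then interpret sorted_fibres_ptrace "length basis" "length B_basis" B_index A_part g f \<rho> p .
  have "(\<Sum>u<length B_basis. block_sum g p u * log \<beta> (block_sum g p u))
      = (\<Sum>k\<le>N. \<Sum>b<dB k. (\<Sum>a<dA k. p ! ((\<Sum>j<k. dA j * dB j) + b * dA k + a))
                       * log \<beta> (\<Sum>a<dA k. p ! ((\<Sum>j<k. dA j * dB j) + b * dA k + a)))"
    using sum_block_sum_sector_blocks[of "\<lambda>x. x * log \<beta> x" dA dB "Suc N" p] length_g
    unfolding g_def by (simp add: lessThan_Suc_atMost)
  then show ?thesis
    using vN_entropy_label_ptrace_ge[OF assms(4)] vN_entropy_label_ptrace_attained[of \<beta>]
    unfolding Let_def ptrace_A_eq_label_ptrace dA_def dB_def by (metis (no_types, lifting))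
qed

end
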